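(* Let $k'\subset K'$ be a finite totally ramified extension of complete discrete valuation fields of degree $n'$, and let $i,j\in\mathbb Z$. Then: 1. $X_iX_j\subset X_{i+j}$; consequently $X_0$ is a subring of $K'\otimes_{k'}K'$ and each $X_i$ is an $X_0$-module. 2. $X_i/X_{i+1}$ is a free module of rank one over the ring $X_0/X_1$. 3. $X_i=\bigoplus_{l=0}^{n'-1}\pi'^l\otimes\mathfrak m'^{\,i-l}$. 4. For every $\varepsilon\in O_{K'}^*$ one has $\varepsilon\otimes\varepsilon^{-1}\in 1+X_1$. Consequently, for $x\in K'^*$ and $\varepsilon_1,\varepsilon_2\in O_{K'}^*$, the class of $\varepsilon_1x\otimes\varepsilon_2x^{-1}$ in $X_0/X_1$ equals the class of $(\varepsilon_1\varepsilon_2\otimes1)(\pi'\otimes\pi'^{-1})^{v'(x)}$, and the class of $x\otimes x^{-1}$ is $1$ if $n'\mid v'(x)$. 5. There is a unique isomorphism of unital $\bar k'$-algebras $r_X: X_0/X_1\to R'=\bar k'[X]/(X^{n'}-1)$ sending the class of $\pi'\otimes\pi'^{-1}$ to $X$; moreover this class and this isomorphism do not depend on the choice of the uniformizer $\pi'$. 6. $t$ is a ring automorphism of $K'\otimes_{k'}K'$ mapping each $X_i$ onto itself, and for every $\alpha\in X_0$ one has $r_X(t(\alpha))=r_X(\alpha)(X^{-1})$ (note $X$ is invertible in $R'$).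
   Context: $O_{K'}\supset O_{k'}$ are the rings of integers, $\mathfrak m'$ the maximal ideal of $O_{K'}$, $\bar k'$ the common residue field, $\pi'$ a uniformizer of $K'$, $v'$ the valuation of $K'$ with $v'(K'^* )=\mathbb Z$. All tensor products are over $k'$; for $O_{k'}$-submodules $A,B\subset K'$, $A\otimes B$ denotes the $O_{k'}$-submodule of $K'\otimes_{k'}K'$ generated by all $a\otimes b$, $a\in A,b\in B$. For $i\in\mathbb Z$, $X_i=\sum_{j\in\mathbb Z}\mathfrak m'^j\otimes\mathfrak m'^{\,i-j}\subset K'\otimes_{k'}K'$. $t$ denotes the $k'$-linear map $x\otimes y\mapsto y\otimes x$. $X_0/X_1$ is a $\bar k'$-algebra via $O_{k'}\to X_0$. *)

theory Defs
  imports "HOL-Computational_Algebra.Polynomial"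
begin

text \<open>K' is modelled by a field type 'a, k' by a subfield S of it, and v' by a function
 v :: 'a => int (its value at 0 is irrelevant).\<close>

definition subfield :: "'a::field set \<Rightarrow> bool" where
  "subfield S \<longleftrightarrow> 0 \<in> S \<and> 1 \<in> S \<and> (\<forall>x\<in>S. \<forall>y\<in>S. x + y \<in> S \<and> x * y \<in> S)
     \<and> (\<forall>x\<in>S. - x \<in> S \<and> inverse x \<in> S)"

definition mpow :: "('a::field \<Rightarrow> int) \<Rightarrow> int \<Rightarrow> 'a set" where
  "mpow v j = {x. x = 0 \<or> j \<le> v x}"

definition vring :: "('a::field \<Rightarrow> int) \<Rightarrow> 'a set" where
  "vring v = mpow v 0"

definition vunits :: "('a::field \<Rightarrow> int) \<Rightarrow> 'a set" where
  "vunits v = {x. x \<noteq> 0 \<and> v x = 0}"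

definition discrete_valuation :: "('a::field \<Rightarrow> int) \<Rightarrow> bool" where
  "discrete_valuation v \<longleftrightarrow>
     (\<forall>x y. x \<noteq> 0 \<longrightarrow> y \<noteq> 0 \<longrightarrow> v (x * y) = v x + v y)
   \<and> (\<forall>x y. x \<noteq> 0 \<longrightarrow> y \<noteq> 0 \<longrightarrow> x + y \<noteq> 0 \<longrightarrow> min (v x) (v y) \<le> v (x + y))
   \<and> (\<forall>k. \<exists>x. x \<noteq> 0 \<and> v x = k)"

definition v_cauchy :: "('a::field \<Rightarrow> int) \<Rightarrow> (nat \<Rightarrow> 'a) \<Rightarrow> bool" where
  "v_cauchy v X \<longleftrightarrow> (\<forall>N. \<exists>M. \<forall>p\<ge>M. \<forall>q\<ge>M. X p - X q \<in> mpow v N)"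

definition v_converges :: "('a::field \<Rightarrow> int) \<Rightarrow> (nat \<Rightarrow> 'a) \<Rightarrow> 'a \<Rightarrow> bool" where
  "v_converges v X L \<longleftrightarrow> (\<forall>N. \<exists>M. \<forall>p\<ge>M. X p - L \<in> mpow v N)"

definition v_complete_on :: "('a::field \<Rightarrow> int) \<Rightarrow> 'a set \<Rightarrow> bool" where
  "v_complete_on v S \<longleftrightarrow>
     (\<forall>X. (\<forall>n. X n \<in> S) \<longrightarrow> v_cauchy v X \<longrightarrow> (\<exists>L\<in>S. v_converges v X L))"

definition ext_degree :: "'a::field set \<Rightarrow> nat \<Rightarrow> bool" where
  "ext_degree S n \<longleftrightarrow> (\<exists>b :: nat \<Rightarrow> 'a.
      (\<forall>c. (\<forall>i<n. c i \<in> S) \<longrightarrow> (\<Sum>i<n. c i * b i) = 0 \<longrightarrow> (\<forall>i<n. c i = 0))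
    \<and> (\<forall>x. \<exists>c. (\<forall>i<n. c i \<in> S) \<and> x = (\<Sum>i<n. c i * b i)))"

text \<open>S \<subseteq> K' is a finite totally ramified extension of complete discrete valuation fields of
 degree n: both complete, [K':S] = n and ramification index n, i.e. v'(S^*) = n Z.\<close>
definition totally_ramified_cdvf :: "'a::field set \<Rightarrow> ('a \<Rightarrow> int) \<Rightarrow> nat \<Rightarrow> bool" where
  "totally_ramified_cdvf S v n \<longleftrightarrow>
     subfield S \<and> discrete_valuation v \<and> v_complete_on v UNIV \<and> v_complete_on v S
   \<and> ext_degree S n \<and> {v x | x. x \<in> S \<and> x \<noteq> 0} = {int n * z | z. True}"

text \<open>res : O_{K'} -> 'k realizes the residue field: a surjective unital ring homomorphism
 with kernel m'.\<close>
definition residue_map :: "('a::field \<Rightarrow> int) \<Rightarrow> ('a \<Rightarrow> 'k::field) \<Rightarrow> bool" where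
  "residue_map v res \<longleftrightarrow>
     (\<forall>x\<in>vring v. \<forall>y\<in>vring v. res (x + y) = res x + res y \<and> res (x * y) = res x * res y)
   \<and> res 1 = 1 \<and> (\<forall>x\<in>vring v. res x = 0 \<longleftrightarrow> x \<in> mpow v 1) \<and> res ` vring v = UNIV"

text \<open>Free S-module on K' x K': finitely supported functions with values in S.\<close>
type_synonym 'a fm = "'a \<times> 'a \<Rightarrow> 'a"

definition fm_ok :: "'a::field set \<Rightarrow> 'a fm \<Rightarrow> bool" where
  "fm_ok S f \<longleftrightarrow> finite {p. f p \<noteq> 0} \<and> (\<forall>p. f p \<in> S)"

definition delta :: "'a::field \<Rightarrow> 'a \<Rightarrow> 'a fm" where
  "delta a b = (\<lambda>p. if p = (a, b) then 1 else 0)"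

inductive_set relN :: "'a::field set \<Rightarrow> 'a fm set" for S where
  zero: "(\<lambda>_. 0) \<in> relN S"
| add1: "(\<lambda>p. delta (a + a') b p - delta a b p - delta a' b p) \<in> relN S"
| add2: "(\<lambda>p. delta a (b + b') p - delta a b p - delta a b' p) \<in> relN S"
| sc1: "c \<in> S \<Longrightarrow> (\<lambda>p. delta (c * a) b p - c * delta a b p) \<in> relN S"
| sc2: "c \<in> S \<Longrightarrow> (\<lambda>p. delta a (c * b) p - c * delta a b p) \<in> relN S"
| plus: "f \<in> relN S \<Longrightarrow> g \<in> relN S \<Longrightarrow> (\<lambda>p. f p + g p) \<in> relN S"
| smult: "c \<in> S \<Longrightarrow> f \<in> relN S \<Longrightarrow> (\<lambda>p. c * f p) \<in> relN S"

text \<open>Elements of K' \<otimes>_S K' are the equivalence classes.\<close>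
type_synonym 'a tens = "'a fm set"

definition cls :: "'a::field set \<Rightarrow> 'a fm \<Rightarrow> 'a tens" where
  "cls S f = {g. fm_ok S g \<and> (\<lambda>p. f p - g p) \<in> relN S}"

definition tcarrier :: "'a::field set \<Rightarrow> 'a tens set" where
  "tcarrier S = {cls S f | f. fm_ok S f}"

definition conv :: "'a::field fm \<Rightarrow> 'a fm \<Rightarrow> 'a fm" where
  "conv f g = (\<lambda>p. \<Sum>q \<in> {(q1, q2). f q1 \<noteq> 0 \<and> g q2 \<noteq> 0 \<and>
        (fst q1 * fst q2, snd q1 * snd q2) = p}. f (fst q) * g (snd q))"

definition tp :: "'a::field set \<Rightarrow> 'a \<Rightarrow> 'a \<Rightarrow> 'a tens" where
  "tp S a b = cls S (delta a b)"

definition tzero :: "'a::field set \<Rightarrow> 'a tens" where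
  "tzero S = cls S (\<lambda>_. 0)"

definition tone :: "'a::field set \<Rightarrow> 'a tens" where
  "tone S = tp S 1 1"

definition tadd :: "'a::field set \<Rightarrow> 'a tens \<Rightarrow> 'a tens \<Rightarrow> 'a tens" where
  "tadd S x y = {h. \<exists>f\<in>x. \<exists>g\<in>y. h \<in> cls S (\<lambda>p. f p + g p)}"

definition tneg :: "'a::field set \<Rightarrow> 'a tens \<Rightarrow> 'a tens" where
  "tneg S x = {h. \<exists>f\<in>x. h \<in> cls S (\<lambda>p. - f p)}"

definition tsub :: "'a::field set \<Rightarrow> 'a tens \<Rightarrow> 'a tens \<Rightarrow> 'a tens" where
  "tsub S x y = tadd S x (tneg S y)"

definition tmul :: "'a::field set \<Rightarrow> 'a tens \<Rightarrow> 'a tens \<Rightarrow> 'a tens" where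
  "tmul S x y = {h. \<exists>f\<in>x. \<exists>g\<in>y. h \<in> cls S (conv f g)}"

definition tswap :: "'a::field set \<Rightarrow> 'a tens \<Rightarrow> 'a tens" where
  "tswap S x = {h. \<exists>f\<in>x. h \<in> cls S (\<lambda>(a, b). f (b, a))}"

primrec tpow :: "'a::field set \<Rightarrow> 'a tens \<Rightarrow> nat \<Rightarrow> 'a tens" where
  "tpow S x 0 = tone S"
| "tpow S x (Suc n) = tmul S (tpow S x n) x"

definition tinv :: "'a::field set \<Rightarrow> 'a tens \<Rightarrow> 'a tens" where
  "tinv S x = (SOME y. y \<in> tcarrier S \<and> tmul S x y = tone S)"

definition tpowi :: "'a::field set \<Rightarrow> 'a tens \<Rightarrow> int \<Rightarrow> 'a tens" where
  "tpowi S x k = (if 0 \<le> k then tpow S x (nat k) else tpow S (tinv S x) (nat (- k)))"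

primrec tsum :: "'a::field set \<Rightarrow> (nat \<Rightarrow> 'a tens) \<Rightarrow> nat \<Rightarrow> 'a tens" where
  "tsum S y 0 = tzero S"
| "tsum S y (Suc n) = tadd S (tsum S y n) (y n)"

inductive_set ospan :: "'a::field set \<Rightarrow> ('a \<Rightarrow> int) \<Rightarrow> 'a tens set \<Rightarrow> 'a tens set"
  for S v G where
  zero: "tzero S \<in> ospan S v G"
| gen: "x \<in> G \<Longrightarrow> x \<in> ospan S v G"
| add: "x \<in> ospan S v G \<Longrightarrow> y \<in> ospan S v G \<Longrightarrow> tadd S x y \<in> ospan S v G"
| smult: "c \<in> S \<Longrightarrow> c \<in> vring v \<Longrightarrow> x \<in> ospan S v G \<Longrightarrow> tmul S (tp S c 1) x \<in> ospan S v G"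

definition otens :: "'a::field set \<Rightarrow> ('a \<Rightarrow> int) \<Rightarrow> 'a set \<Rightarrow> 'a set \<Rightarrow> 'a tens set" where
  "otens S v A B = ospan S v {tp S a b | a b. a \<in> A \<and> b \<in> B}"

definition Xfil :: "'a::field set \<Rightarrow> ('a \<Rightarrow> int) \<Rightarrow> int \<Rightarrow> 'a tens set" where
  "Xfil S v i = ospan S v (\<Union>j. {tp S a b | a b. a \<in> mpow v j \<and> b \<in> mpow v (i - j)})"

text \<open>Concrete rendering of an isomorphism r_X : X_0/X_1 \<rightarrow> R' = kbar[X]/(X^n - 1) of unital
 kbar-algebras sending the class of \<pi> \<otimes> \<pi>^{-1} to X: R' is represented by the reduced
 polynomials (degree < n), r is given as a map on X_0 which is additive, multiplicative modulo
 X^n - 1, unital, kbar-linear (the class of a \<otimes> 1, a \<in> O_{k'}, goes to the constant res a),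
 has kernel exactly X_1 and is onto R'.\<close>
definition is_rX :: "'a::field set \<Rightarrow> ('a \<Rightarrow> int) \<Rightarrow> ('a \<Rightarrow> 'k::field) \<Rightarrow> nat \<Rightarrow> 'a
    \<Rightarrow> ('a tens \<Rightarrow> 'k poly) \<Rightarrow> bool" where
  "is_rX S v res n \<pi> r \<longleftrightarrow>
     (let f = monom 1 n - 1 in
       (\<forall>\<alpha>\<in>Xfil S v 0. degree (r \<alpha>) < n)
     \<and> (\<forall>\<alpha>\<in>Xfil S v 0. \<forall>\<beta>\<in>Xfil S v 0. r (tadd S \<alpha> \<beta>) = r \<alpha> + r \<beta>)
     \<and> (\<forall>\<alpha>\<in>Xfil S v 0. \<forall>\<beta>\<in>Xfil S v 0. r (tmul S \<alpha> \<beta>) = (r \<alpha> * r \<beta>) mod f)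
     \<and> r (tone S) = 1 mod f
     \<and> (\<forall>a\<in>S \<inter> vring v. r (tp S a 1) = [:res a:] mod f)
     \<and> (\<forall>\<alpha>\<in>Xfil S v 0. r \<alpha> = 0 \<longleftrightarrow> \<alpha> \<in> Xfil S v 1)
     \<and> (\<forall>p. degree p < n \<longrightarrow> (\<exists>\<alpha>\<in>Xfil S v 0. r \<alpha> = p))
     \<and> r (tp S \<pi> (inverse \<pi>)) = [:0, 1:] mod f)"

end

theory Submission
  imports Defs
begin

text \<open>Since \<open>v(k'\<^sup>*) = n\<int>\<close>, the elements \<open>c \<pi>\<^sup>l\<close> (\<open>c \<in> k'\<close>, \<open>l < n\<close>) have pairwise distinct
  valuations, so \<open>1, \<pi>, \<dots>, \<pi>\<^sup>n\<^sup>-\<^sup>1\<close> is a \<open>k'\<close>-basis of \<open>K'\<close> and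
  \<open>K' \<otimes> K' \<cong> K'\<^sup>n\<close> via \<open>a \<otimes> b \<mapsto> (c\<^sub>l(a) b)\<^sub>l\<close>, where \<open>a = \<Sum> c\<^sub>l(a) \<pi>\<^sup>l\<close>. In these coordinates
  \<open>X\<^sub>i\<close> consists of the \<open>\<beta>\<close> with \<open>\<beta>\<^sub>l \<in> m'\<^bsup>i-l\<^esup>\<close>, which gives the decomposition of \<open>X\<^sub>i\<close>;
  \<open>X\<^sub>i X\<^sub>j \<subseteq> X\<^sub>i\<^sub>+\<^sub>j\<close> and \<open>t(X\<^sub>i) = X\<^sub>i\<close> are checked on generators \<open>a \<otimes> b\<close>.
  On \<open>X\<^sub>0\<close> the map \<open>r\<^sub>X(\<beta>) = \<Sum>\<^sub>l res(\<pi>\<^sup>l \<beta>\<^sub>l) X\<^sup>l\<close> is additive, has kernel \<open>X\<^sub>1\<close>, is onto,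
  and sends \<open>a \<otimes> b\<close> to \<open>res(ab) X\<^bsup>v(a) mod n\<^esup>\<close>. This formula shows that \<open>r\<^sub>X\<close> is multiplicative
  modulo \<open>X\<^sup>n - 1\<close>, that \<open>r\<^sub>X \<circ> t = r\<^sub>X(X\<^sup>-\<^sup>1)\<close>, and, comparing images under \<open>r\<^sub>X\<close>, all the
  congruences modulo \<open>X\<^sub>1\<close> of the statement. Uniqueness holds because \<open>X\<^sub>0/X\<^sub>1\<close> is spanned
  by the classes of \<open>(c \<otimes> 1)(\<pi> \<otimes> \<pi>\<^sup>-\<^sup>1)\<^sup>k\<close> with \<open>c \<in> O\<^sub>k\<^sub>'\<close>.\<close>

section \<open>Subfields and the free module on pairs\<close>

lemma subfield_zero: "subfield S \<Longrightarrow> 0 \<in> S"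
  and subfield_one: "subfield S \<Longrightarrow> 1 \<in> S"
  and subfield_add: "subfield S \<Longrightarrow> x \<in> S \<Longrightarrow> y \<in> S \<Longrightarrow> x + y \<in> S"
  and subfield_mult: "subfield S \<Longrightarrow> x \<in> S \<Longrightarrow> y \<in> S \<Longrightarrow> x * y \<in> S"
  and subfield_uminus: "subfield S \<Longrightarrow> x \<in> S \<Longrightarrow> - x \<in> S"
  and subfield_inverse: "subfield S \<Longrightarrow> x \<in> S \<Longrightarrow> inverse x \<in> S"
  by (auto simp: subfield_def)

lemma subfield_diff: "subfield S \<Longrightarrow> x \<in> S \<Longrightarrow> y \<in> S \<Longrightarrow> x - y \<in> S"
  using subfield_add[of S x "- y"] subfield_uminus[of S y] by simp

lemma subfield_divide: "subfield S \<Longrightarrow> x \<in> S \<Longrightarrow> y \<in> S \<Longrightarrow> x / y \<in> S"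
  by (simp add: divide_inverse subfield_mult subfield_inverse)

lemma subfield_sum: "subfield S \<Longrightarrow> (\<And>i. i \<in> I \<Longrightarrow> f i \<in> S) \<Longrightarrow> sum f I \<in> S"
  by (induction I rule: infinite_finite_induct) (auto simp: subfield_zero subfield_add)

lemma delta_in_subfield: "subfield S \<Longrightarrow> delta a b p \<in> S"
  by (auto simp: delta_def subfield_zero subfield_one)

definition fsupp :: "'a::field fm \<Rightarrow> ('a \<times> 'a) set" where
  "fsupp f = {p. f p \<noteq> 0}"

lemma fm_ok_iff: "fm_ok S f \<longleftrightarrow> finite (fsupp f) \<and> (\<forall>p. f p \<in> S)"
  by (simp add: fm_ok_def fsupp_def)

lemma fm_ok_finite: "fm_ok S f \<Longrightarrow> finite (fsupp f)"
  by (simp add: fm_ok_iff)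

lemma finite_fsupp_delta [simp]: "finite (fsupp (delta a b))"
proof -
  have "fsupp (delta a b) \<subseteq> {(a, b)}" by (auto simp: fsupp_def delta_def)
  then show ?thesis by (rule finite_subset) simp
qed

lemma finite_fsupp_add [simp]:
  "finite (fsupp f) \<Longrightarrow> finite (fsupp g) \<Longrightarrow> finite (fsupp (\<lambda>p. f p + g p))"
  by (rule finite_subset[of _ "fsupp f \<union> fsupp g"]) (auto simp: fsupp_def)

lemma finite_fsupp_scale [simp]: "finite (fsupp f) \<Longrightarrow> finite (fsupp (\<lambda>p. c * f p))"
  by (rule finite_subset[of _ "fsupp f"]) (auto simp: fsupp_def)

lemma finite_fsupp_uminus [simp]: "finite (fsupp f) \<Longrightarrow> finite (fsupp (\<lambda>p. - f p))"
  by (simp add: fsupp_def)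

lemma finite_fsupp_diff [simp]:
  "finite (fsupp f) \<Longrightarrow> finite (fsupp g) \<Longrightarrow> finite (fsupp (\<lambda>p. f p - g p))"
  using finite_fsupp_add[of f "\<lambda>p. - g p"] by simp

lemma fm_ok_add: "subfield S \<Longrightarrow> fm_ok S f \<Longrightarrow> fm_ok S g \<Longrightarrow> fm_ok S (\<lambda>p. f p + g p)"
  by (simp add: fm_ok_iff subfield_add)

lemma fm_ok_scale: "subfield S \<Longrightarrow> c \<in> S \<Longrightarrow> fm_ok S f \<Longrightarrow> fm_ok S (\<lambda>p. c * f p)"
  by (simp add: fm_ok_iff subfield_mult)

lemma fm_ok_uminus: "subfield S \<Longrightarrow> fm_ok S f \<Longrightarrow> fm_ok S (\<lambda>p. - f p)"
  by (simp add: fm_ok_iff subfield_uminus)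

lemma fm_ok_diff: "subfield S \<Longrightarrow> fm_ok S f \<Longrightarrow> fm_ok S g \<Longrightarrow> fm_ok S (\<lambda>p. f p - g p)"
  by (simp add: fm_ok_iff subfield_diff)

lemma fm_ok_zero: "subfield S \<Longrightarrow> fm_ok S (\<lambda>_. 0)"
  by (simp add: fm_ok_def subfield_zero)

lemma fm_ok_delta: "subfield S \<Longrightarrow> fm_ok S (delta a b)"
  by (simp add: fm_ok_iff delta_in_subfield)

lemma fm_ok_swap: "fm_ok S f \<Longrightarrow> fm_ok S (\<lambda>(a, b). f (b, a))"
proof -
  assume f: "fm_ok S f"
  have "fsupp (\<lambda>(a, b). f (b, a)) = prod.swap ` fsupp f" by (auto simp: fsupp_def image_iff)
  then show ?thesis using f unfolding fm_ok_iff by auto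
qed

lemma fm_expand:
  assumes "finite B" "fsupp f \<subseteq> B"
  shows "f = (\<lambda>p. \<Sum>q\<in>B. f q * delta (fst q) (snd q) p)"
proof
  fix p
  have "(\<Sum>q\<in>B. f q * delta (fst q) (snd q) p) = (\<Sum>q\<in>B. if q = p then f q else 0)"
    by (rule sum.cong) (auto simp: delta_def)
  also have "\<dots> = f p" using assms by (auto simp: fsupp_def)
  finally show "f p = (\<Sum>q\<in>B. f q * delta (fst q) (snd q) p)" by simp
qed

lemma relN_sum:
  assumes "finite I" "\<And>i. i \<in> I \<Longrightarrow> c i \<in> S" "\<And>i. i \<in> I \<Longrightarrow> g i \<in> relN S"
  shows "(\<lambda>p. \<Sum>i\<in>I. c i * g i p) \<in> relN S"
  using assms
proof (induction I rule: finite_induct)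
  case empty
  then show ?case using relN.zero by simp
next
  case (insert x F)
  have "(\<lambda>p. c x * g x p) \<in> relN S" using insert by (intro relN.smult) auto
  from relN.plus[OF this, of "\<lambda>p. \<Sum>i\<in>F. c i * g i p"] insert show ?case by simp
qed

lemma relN_uminus: "subfield S \<Longrightarrow> f \<in> relN S \<Longrightarrow> (\<lambda>p. - f p) \<in> relN S"
  using relN.smult[of "- 1" S f] by (simp add: subfield_uminus subfield_one)

lemma relN_diff: "subfield S \<Longrightarrow> f \<in> relN S \<Longrightarrow> g \<in> relN S \<Longrightarrow> (\<lambda>p. f p - g p) \<in> relN S"
  using relN.plus[OF _ relN_uminus[of S g], of f] by simp

lemma relN_fm_ok:
  assumes S: "subfield S" and f: "f \<in> relN S"
  shows "fm_ok S f"
  using f by induction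
    (auto intro!: fm_ok_add[OF S] fm_ok_scale[OF S] fm_ok_diff[OF S] fm_ok_delta[OF S] fm_ok_zero[OF S])

lemma delta_swap: "delta a b (snd p, fst p) = delta b a p"
  by (auto simp: delta_def)

lemma relN_finite: "subfield S \<Longrightarrow> f \<in> relN S \<Longrightarrow> finite (fsupp f)"
  using relN_fm_ok fm_ok_finite by blast

lemma relN_swap:
  assumes "r \<in> relN S"
  shows "(\<lambda>(x, y). r (y, x)) \<in> relN S"
  using assms
proof induction
  case (add1 a a' b)
  show ?case using relN.add2[of b a a' S] by (simp add: delta_swap case_prod_unfold)
next
  case (add2 a b b')
  show ?case using relN.add1[of b b' a S] by (simp add: delta_swap case_prod_unfold)
next
  case (sc1 c a b)
  show ?case using relN.sc2[OF sc1, of b a] by (simp add: delta_swap case_prod_unfold)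
next
  case (sc2 c a b)
  show ?case using relN.sc1[OF sc2, of b a] by (simp add: delta_swap case_prod_unfold)
next
  case (plus f g)
  then show ?case using relN.plus[of "\<lambda>(x, y). f (y, x)" S "\<lambda>(x, y). g (y, x)"]
    by (simp add: case_prod_unfold)
next
  case (smult c f)
  then show ?case using relN.smult[of c S "\<lambda>(x, y). f (y, x)"] by (simp add: case_prod_unfold)
qed (simp add: relN.zero)

definition pair_mult :: "'a::field \<times> 'a \<Rightarrow> 'a \<times> 'a \<Rightarrow> 'a \<times> 'a" where
  "pair_mult q1 q2 = (fst q1 * fst q2, snd q1 * snd q2)"

lemma conv_eq:
  assumes "finite A" "finite B" "fsupp f \<subseteq> A" "fsupp g \<subseteq> B"
  shows "conv f g p = (\<Sum>q1\<in>A. \<Sum>q2\<in>B. if pair_mult q1 q2 = p then f q1 * g q2 else 0)"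
proof -
  let ?Q = "{(q1, q2). f q1 \<noteq> 0 \<and> g q2 \<noteq> 0 \<and> (fst q1 * fst q2, snd q1 * snd q2) = p}"
  have Q: "?Q \<subseteq> A \<times> B" using assms(3,4) by (auto simp: fsupp_def)
  have "(\<Sum>q1\<in>A. \<Sum>q2\<in>B. if pair_mult q1 q2 = p then f q1 * g q2 else 0)
      = (\<Sum>q\<in>A \<times> B. if pair_mult (fst q) (snd q) = p then f (fst q) * g (snd q) else 0)"
    by (simp add: sum.cartesian_product case_prod_beta)
  also have "\<dots> = (\<Sum>q\<in>?Q. f (fst q) * g (snd q))"
    by (rule sum.mono_neutral_cong_right) (use Q assms in \<open>auto simp: pair_mult_def\<close>)
  finally show ?thesis by (simp add: conv_def)
qed

lemma conv_eq_fsupp: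
  "finite (fsupp f) \<Longrightarrow> finite (fsupp g) \<Longrightarrow>
    conv f g p = (\<Sum>q1\<in>fsupp f. \<Sum>q2\<in>fsupp g. if pair_mult q1 q2 = p then f q1 * g q2 else 0)"
  by (rule conv_eq) auto

lemma conv_comm:
  assumes "finite (fsupp f)" "finite (fsupp g)"
  shows "conv f g = conv g f"
proof
  fix p
  show "conv f g p = conv g f p"
    unfolding conv_eq_fsupp[OF assms] conv_eq_fsupp[OF assms(2,1)]
    by (subst sum.swap) (auto intro!: sum.cong simp: pair_mult_def ac_simps)
qed

lemma conv_add_left:
  assumes "finite (fsupp f)" "finite (fsupp f')" "finite (fsupp g)"
  shows "conv (\<lambda>p. f p + f' p) g = (\<lambda>p. conv f g p + conv f' g p)"
proof
  fix p
  let ?A = "fsupp f \<union> fsupp f'"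
  have s: "fsupp (\<lambda>p. f p + f' p) \<subseteq> ?A" "fsupp f \<subseteq> ?A" "fsupp f' \<subseteq> ?A"
    by (auto simp: fsupp_def)
  have fin: "finite ?A" using assms by simp
  show "conv (\<lambda>p. f p + f' p) g p = conv f g p + conv f' g p"
    unfolding conv_eq[OF fin assms(3) s(1) order_refl] conv_eq[OF fin assms(3) s(2) order_refl]
      conv_eq[OF fin assms(3) s(3) order_refl]
    by (auto simp: sum.distrib[symmetric] distrib_right intro!: sum.cong)
qed

lemma conv_scale_left:
  assumes "finite (fsupp f)" "finite (fsupp g)"
  shows "conv (\<lambda>p. c * f p) g = (\<lambda>p. c * conv f g p)"
proof
  fix p
  have s: "fsupp (\<lambda>p. c * f p) \<subseteq> fsupp f" by (auto simp: fsupp_def)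
  show "conv (\<lambda>p. c * f p) g p = c * conv f g p"
    unfolding conv_eq[OF assms s order_refl] conv_eq_fsupp[OF assms]
    by (auto simp: sum_distrib_left intro!: sum.cong)
qed

lemma conv_diff_left:
  assumes "finite (fsupp f)" "finite (fsupp f')" "finite (fsupp g)"
  shows "conv (\<lambda>p. f p - f' p) g = (\<lambda>p. conv f g p - conv f' g p)"
  using conv_add_left[of f "\<lambda>p. (- 1) * f' p" g] conv_scale_left[of f' g "- 1"] assms by simp

lemma conv_delta_left:
  assumes "finite (fsupp g)"
  shows "conv (delta a b) g = (\<lambda>p. \<Sum>q\<in>fsupp g. g q * delta (a * fst q) (b * snd q) p)"
proof
  fix p
  have s: "fsupp (delta a b) \<subseteq> {(a, b)}" by (auto simp: fsupp_def delta_def)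
  have fin: "finite {(a, b)}" by simp
  show "conv (delta a b) g p = (\<Sum>q\<in>fsupp g. g q * delta (a * fst q) (b * snd q) p)"
    unfolding conv_eq[OF fin assms s order_refl]
    by (auto intro!: sum.cong simp: pair_mult_def delta_def)
qed

lemma conv_delta_delta: "conv (delta a b) (delta c d) = delta (a * c) (b * d)"
proof -
  have "fsupp (delta c d) = {(c, d)}" by (auto simp: fsupp_def delta_def)
  then show ?thesis by (simp add: conv_delta_left) (simp add: delta_def)
qed

lemma conv_one: "finite (fsupp f) \<Longrightarrow> conv (delta 1 1) f = f"
  by (simp add: conv_delta_left fm_expand[symmetric])

lemma conv_zero: "conv (\<lambda>_. 0) f = (\<lambda>_. 0)"
  by (simp add: conv_def)

lemma fsupp_conv:
  assumes "finite (fsupp f)" "finite (fsupp g)"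
  shows "fsupp (conv f g) \<subseteq> (\<lambda>(a, b). pair_mult a b) ` (fsupp f \<times> fsupp g)"
proof
  fix p assume "p \<in> fsupp (conv f g)"
  then have "(\<Sum>q1\<in>fsupp f. \<Sum>q2\<in>fsupp g. if pair_mult q1 q2 = p then f q1 * g q2 else 0) \<noteq> 0"
    by (simp add: fsupp_def conv_eq_fsupp[OF assms])
  then obtain q1 where q1: "q1 \<in> fsupp f"
    "(\<Sum>q2\<in>fsupp g. if pair_mult q1 q2 = p then f q1 * g q2 else 0) \<noteq> 0"
    by (rule sum.not_neutral_contains_not_neutral)
  from q1(2) obtain q2 where "q2 \<in> fsupp g" "(if pair_mult q1 q2 = p then f q1 * g q2 else 0) \<noteq> 0"
    by (rule sum.not_neutral_contains_not_neutral)
  with q1 show "p \<in> (\<lambda>(a, b). pair_mult a b) ` (fsupp f \<times> fsupp g)"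
    by (auto split: if_splits)
qed

lemma finite_fsupp_conv [simp]:
  "finite (fsupp f) \<Longrightarrow> finite (fsupp g) \<Longrightarrow> finite (fsupp (conv f g))"
  by (rule finite_subset[OF fsupp_conv]) auto

lemma fm_ok_conv:
  assumes S: "subfield S" and f: "fm_ok S f" and g: "fm_ok S g"
  shows "fm_ok S (conv f g)"
proof -
  have "conv f g p \<in> S" for p
    using f g unfolding conv_eq_fsupp[OF fm_ok_finite[OF f] fm_ok_finite[OF g]]
    by (intro subfield_sum[OF S]) (auto simp: fm_ok_iff subfield_zero[OF S] subfield_mult[OF S])
  then show ?thesis using f g by (simp add: fm_ok_iff)
qed

lemma sum_swap3: "(\<Sum>z\<in>C. \<Sum>x\<in>A. \<Sum>y\<in>B. F x y z) = (\<Sum>x\<in>A. \<Sum>y\<in>B. \<Sum>z\<in>C. F x y z)"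
  by (subst sum.swap) (rule sum.cong[OF refl], rule sum.swap)

lemma sum_collapse:
  assumes "finite R" "\<And>a b. a \<in> A \<Longrightarrow> b \<in> B \<Longrightarrow> \<phi> a b \<in> R"
  shows "(\<Sum>r\<in>R. \<Sum>a\<in>A. \<Sum>b\<in>B. if \<phi> a b = r then G a b r else 0)
    = (\<Sum>a\<in>A. \<Sum>b\<in>B. G a b (\<phi> a b))"
proof -
  have "(\<Sum>r\<in>R. \<Sum>a\<in>A. \<Sum>b\<in>B. if \<phi> a b = r then G a b r else 0)
      = (\<Sum>a\<in>A. \<Sum>b\<in>B. \<Sum>r\<in>R. if \<phi> a b = r then G a b r else 0)"
    by (rule sum_swap3)
  also have "\<dots> = (\<Sum>a\<in>A. \<Sum>b\<in>B. G a b (\<phi> a b))"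
    using assms by (auto intro!: sum.cong simp: sum.delta)
  finally show ?thesis .
qed

lemma conv_conv_left:
  assumes f: "finite (fsupp f)" and g: "finite (fsupp g)" and h: "finite (fsupp h)"
  shows "conv (conv f g) h p = (\<Sum>q1\<in>fsupp f. \<Sum>q2\<in>fsupp g. \<Sum>q3\<in>fsupp h.
    if pair_mult (pair_mult q1 q2) q3 = p then f q1 * g q2 * h q3 else 0)"
proof -
  define R where "R = (\<lambda>(a, b). pair_mult a b) ` (fsupp f \<times> fsupp g)"
  have R: "finite R" "fsupp (conv f g) \<subseteq> R" using f g fsupp_conv[OF f g] by (auto simp: R_def)
  have "conv (conv f g) h p
      = (\<Sum>r\<in>R. \<Sum>q3\<in>fsupp h. if pair_mult r q3 = p then conv f g r * h q3 else 0)"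
    by (rule conv_eq) (use R h in auto)
  also have "\<dots> = (\<Sum>r\<in>R. \<Sum>q1\<in>fsupp f. \<Sum>q2\<in>fsupp g. if pair_mult q1 q2 = r
      then (\<Sum>q3\<in>fsupp h. if pair_mult r q3 = p then f q1 * g q2 * h q3 else 0) else 0)"
  proof (rule sum.cong[OF refl])
    fix r
    have "(\<Sum>q3\<in>fsupp h. if pair_mult r q3 = p then conv f g r * h q3 else 0)
      = (\<Sum>q3\<in>fsupp h. \<Sum>q1\<in>fsupp f. \<Sum>q2\<in>fsupp g. if pair_mult q1 q2 = r
          then (if pair_mult r q3 = p then f q1 * g q2 * h q3 else 0) else 0)"
    proof (rule sum.cong[OF refl])
      fix q3
      show "(if pair_mult r q3 = p then conv f g r * h q3 else 0) = (\<Sum>q1\<in>fsupp f.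
          \<Sum>q2\<in>fsupp g. if pair_mult q1 q2 = r then (if pair_mult r q3 = p then f q1 * g q2 * h q3
          else 0) else 0)"
        by (cases "pair_mult r q3 = p")
          (auto simp: conv_eq_fsupp[OF f g] sum_distrib_right cong: if_cong intro!: sum.cong)
    qed
    also have "\<dots> = (\<Sum>q1\<in>fsupp f. \<Sum>q2\<in>fsupp g. if pair_mult q1 q2 = r
      then (\<Sum>q3\<in>fsupp h. if pair_mult r q3 = p then f q1 * g q2 * h q3 else 0) else 0)"
      by (subst sum_swap3) (auto simp: sum_distrib_right intro!: sum.cong)
    finally show "(\<Sum>q3\<in>fsupp h. if pair_mult r q3 = p then conv f g r * h q3 else 0) = \<dots>" .
  qed
  also have "\<dots> = (\<Sum>q1\<in>fsupp f. \<Sum>q2\<in>fsupp g. \<Sum>q3\<in>fsupp h.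
      if pair_mult (pair_mult q1 q2) q3 = p then f q1 * g q2 * h q3 else 0)"
    by (rule sum_collapse[OF R(1)]) (auto simp: R_def)
  finally show ?thesis .
qed

lemma conv_assoc:
  assumes f: "finite (fsupp f)" and g: "finite (fsupp g)" and h: "finite (fsupp h)"
  shows "conv (conv f g) h = conv f (conv g h)"
proof
  fix p
  have "conv f (conv g h) p = conv (conv g h) f p" by (simp add: conv_comm assms)
  also have "\<dots> = conv (conv f g) h p"
    unfolding conv_conv_left[OF f g h] conv_conv_left[OF g h f]
    by (subst sum.swap, rule sum.cong[OF refl], subst sum.swap)
      (auto simp: pair_mult_def ac_simps intro!: sum.cong)
  finally show "conv (conv f g) h p = conv f (conv g h) p" ..
qed

lemma conv_expand_right:
  assumes f: "finite (fsupp f)" and g: "finite (fsupp g)"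
  shows "conv f g = (\<lambda>p. \<Sum>q\<in>fsupp g. g q * conv f (delta (fst q) (snd q)) p)"
proof
  fix p
  have "conv f (delta (fst q) (snd q)) p
      = (\<Sum>q1\<in>fsupp f. if pair_mult q1 q = p then f q1 else 0)" for q
    using conv_eq[OF f finite.insertI[OF finite.emptyI] order_refl, of "delta (fst q) (snd q)" q p]
    by (simp add: fsupp_def delta_def cong: if_cong)
  then show "conv f g p = (\<Sum>q\<in>fsupp g. g q * conv f (delta (fst q) (snd q)) p)"
    unfolding conv_eq_fsupp[OF f g]
    by (subst sum.swap) (auto simp: sum_distrib_left intro!: sum.cong)
qed

lemma conv_delta_relN:
  assumes S: "subfield S" and r: "r \<in> relN S"
  shows "conv r (delta c d) \<in> relN S"
  using r
proof induction
  case (add1 a a' b)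
  show ?case using relN.add1[of "a * c" "a' * c" "b * d" S]
    by (simp add: conv_diff_left conv_add_left conv_delta_delta distrib_right)
next
  case (add2 a b b')
  show ?case using relN.add2[of "a * c" "b * d" "b' * d" S]
    by (simp add: conv_diff_left conv_add_left conv_delta_delta distrib_right)
next
  case (sc1 c' a b)
  show ?case using relN.sc1[OF sc1, of "a * c" "b * d"]
    by (simp add: conv_diff_left conv_scale_left conv_delta_delta mult.assoc)
next
  case (sc2 c' a b)
  show ?case using relN.sc2[OF sc2, of "a * c" "b * d"]
    by (simp add: conv_diff_left conv_scale_left conv_delta_delta mult.assoc)
next
  case (plus f g)
  then show ?case by (simp add: conv_add_left relN_finite[OF S] relN.plus)
next
  case (smult c' f)
  then show ?case by (simp add: conv_scale_left relN_finite[OF S] relN.smult)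
qed (simp add: conv_zero relN.zero)

lemma conv_relN_left:
  assumes S: "subfield S" and r: "r \<in> relN S" and g: "fm_ok S g"
  shows "conv r g \<in> relN S"
  unfolding conv_expand_right[OF relN_finite[OF S r] fm_ok_finite[OF g]]
  using g by (intro relN_sum conv_delta_relN[OF S r]) (auto simp: fm_ok_iff)

lemma swap_conv:
  assumes "finite (fsupp f)" "finite (fsupp g)"
  shows "(\<lambda>(x, y). conv f g (y, x)) = conv (\<lambda>(x, y). f (y, x)) (\<lambda>(x, y). g (y, x))"
proof
  fix p
  have s: "fsupp (\<lambda>(x, y). f (y, x)) \<subseteq> prod.swap ` fsupp f"
    "fsupp (\<lambda>(x, y). g (y, x)) \<subseteq> prod.swap ` fsupp g"
    by (auto simp: fsupp_def image_iff)
  have "conv (\<lambda>(x, y). f (y, x)) (\<lambda>(x, y). g (y, x)) p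
      = (\<Sum>q1\<in>prod.swap ` fsupp f. \<Sum>q2\<in>prod.swap ` fsupp g. if pair_mult q1 q2 = p
          then (case q1 of (x, y) \<Rightarrow> f (y, x)) * (case q2 of (x, y) \<Rightarrow> g (y, x)) else 0)"
    by (rule conv_eq) (use assms s in auto)
  also have "\<dots> = (\<Sum>q1\<in>fsupp f. \<Sum>q2\<in>fsupp g.
      if pair_mult q1 q2 = prod.swap p then f q1 * g q2 else 0)"
    by (simp add: sum.reindex)
      (auto simp: pair_mult_def prod_eq_iff case_prod_unfold intro!: sum.cong)
  also have "\<dots> = conv f g (prod.swap p)" by (rule conv_eq_fsupp[OF assms, symmetric])
  finally show "(case p of (x, y) \<Rightarrow> conv f g (y, x))
      = conv (\<lambda>(x, y). f (y, x)) (\<lambda>(x, y). g (y, x)) p"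
    by (simp add: case_prod_unfold prod.swap_def)
qed

section \<open>The ring \<open>K' \<otimes>\<^bsub>k'\<^esub> K'\<close>\<close>

locale tensor_ring =
  fixes S :: "'a::field set"
  assumes subfield: "subfield S"
begin

definition eqv :: "'a fm \<Rightarrow> 'a fm \<Rightarrow> bool" where
  "eqv f g \<longleftrightarrow> (\<lambda>p. f p - g p) \<in> relN S"

lemma eqv_sym: "eqv f g \<Longrightarrow> eqv g f"
  unfolding eqv_def using relN_uminus[OF subfield] by fastforce

lemma eqv_trans: "eqv f g \<Longrightarrow> eqv g h \<Longrightarrow> eqv f h"
  unfolding eqv_def using relN.plus by fastforce

lemma eqv_sum:
  assumes "finite I" "\<And>i. i \<in> I \<Longrightarrow> c i \<in> S" "\<And>i. i \<in> I \<Longrightarrow> eqv (F i) (G i)"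
  shows "eqv (\<lambda>p. \<Sum>i\<in>I. c i * F i p) (\<lambda>p. \<Sum>i\<in>I. c i * G i p)"
proof -
  have "(\<lambda>p. \<Sum>i\<in>I. c i * (F i p - G i p)) \<in> relN S"
    using assms by (intro relN_sum) (auto simp: eqv_def)
  then show ?thesis by (simp add: eqv_def right_diff_distrib sum_subtractf)
qed

lemma eqv_sum_unweighted:
  assumes "finite I" "\<And>i. i \<in> I \<Longrightarrow> eqv (F i) (G i)"
  shows "eqv (\<lambda>p. \<Sum>i\<in>I. F i p) (\<lambda>p. \<Sum>i\<in>I. G i p)"
  using eqv_sum[OF assms(1), of "\<lambda>_. 1" F G] assms(2) subfield_one[OF subfield] by simp

lemma delta_sum_left:
  assumes "finite Q"
  shows "eqv (delta (\<Sum>q\<in>Q. g q) b) (\<lambda>p. \<Sum>q\<in>Q. delta (g q) b p)"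
  using assms
proof (induction Q rule: finite_induct)
  case empty
  have "delta 0 b \<in> relN S"
    using relN_uminus[OF subfield relN.add1[of 0 0 b S]] by simp
  then show ?case by (simp add: eqv_def)
next
  case (insert x F)
  have "eqv (delta (g x + (\<Sum>q\<in>F. g q)) b) (\<lambda>p. delta (g x) b p + delta (\<Sum>q\<in>F. g q) b p)"
    using relN.add1[of "g x" "\<Sum>q\<in>F. g q" b S] by (simp add: eqv_def algebra_simps)
  moreover have "eqv (\<lambda>p. delta (g x) b p + delta (\<Sum>q\<in>F. g q) b p)
      (\<lambda>p. delta (g x) b p + (\<Sum>q\<in>F. delta (g q) b p))"
    using insert.IH by (simp add: eqv_def)
  ultimately show ?case using insert.hyps by (auto dest: eqv_trans)
qed

lemma delta_sum_right:
  assumes "finite Q"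
  shows "eqv (delta a (\<Sum>q\<in>Q. g q)) (\<lambda>p. \<Sum>q\<in>Q. delta a (g q) p)"
  using assms
proof (induction Q rule: finite_induct)
  case empty
  have "delta a 0 \<in> relN S"
    using relN_uminus[OF subfield relN.add2[of a 0 0 S]] by simp
  then show ?case by (simp add: eqv_def)
next
  case (insert x F)
  have "eqv (delta a (g x + (\<Sum>q\<in>F. g q))) (\<lambda>p. delta a (g x) p + delta a (\<Sum>q\<in>F. g q) p)"
    using relN.add2[of a "g x" "\<Sum>q\<in>F. g q" S] by (simp add: eqv_def algebra_simps)
  moreover have "eqv (\<lambda>p. delta a (g x) p + delta a (\<Sum>q\<in>F. g q) p)
      (\<lambda>p. delta a (g x) p + (\<Sum>q\<in>F. delta a (g q) p))"
    using insert.IH by (simp add: eqv_def)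
  ultimately show ?case using insert.hyps by (auto dest: eqv_trans)
qed

lemma delta_scalar_move: "c \<in> S \<Longrightarrow> eqv (delta (c * a) b) (delta a (c * b))"
  using relN_diff[OF subfield relN.sc1 relN.sc2, of c c a b a b] by (simp add: eqv_def)

lemma delta_scalar_right: "c \<in> S \<Longrightarrow> eqv (delta a (c * b)) (\<lambda>p. c * delta a b p)"
  using relN.sc2 by (simp add: eqv_def)

lemma cls_self: "fm_ok S f \<Longrightarrow> f \<in> cls S f"
  by (simp add: cls_def relN.zero)

lemma eqv_cls: "eqv f g \<Longrightarrow> cls S f = cls S g"
proof -
  assume fg: "eqv f g"
  have "(\<lambda>p. f p - h p) \<in> relN S \<longleftrightarrow> (\<lambda>p. g p - h p) \<in> relN S" for h
  proof
    assume "(\<lambda>p. f p - h p) \<in> relN S"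
    from relN_diff[OF subfield this fg[unfolded eqv_def]] show "(\<lambda>p. g p - h p) \<in> relN S"
      by simp
  next
    assume "(\<lambda>p. g p - h p) \<in> relN S"
    from relN.plus[OF fg[unfolded eqv_def] this] show "(\<lambda>p. f p - h p) \<in> relN S" by simp
  qed
  then show ?thesis by (simp add: cls_def)
qed

lemma cls_in: "fm_ok S f \<Longrightarrow> cls S f \<in> tcarrier S"
  by (auto simp: tcarrier_def)

lemma tcarrierE:
  assumes "x \<in> tcarrier S"
  obtains f where "fm_ok S f" "x = cls S f"
  using assms by (auto simp: tcarrier_def)

text \<open>The operations are defined on arbitrary sets of representatives; on classes they are
  computed from any representative.\<close>

lemma tadd_cls:
  assumes f: "fm_ok S f" and g: "fm_ok S g"
  shows "tadd S (cls S f) (cls S g) = cls S (\<lambda>p. f p + g p)"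
proof -
  have "cls S (\<lambda>p. f' p + g' p) = cls S (\<lambda>p. f p + g p)"
    if "f' \<in> cls S f" "g' \<in> cls S g" for f' g'
  proof (rule eqv_cls)
    have "(\<lambda>p. f p - f' p) \<in> relN S" "(\<lambda>p. g p - g' p) \<in> relN S"
      using that by (auto simp: cls_def)
    from relN_uminus[OF subfield relN.plus[OF this]]
    show "eqv (\<lambda>p. f' p + g' p) (\<lambda>p. f p + g p)" by (simp add: eqv_def algebra_simps)
  qed
  then show ?thesis unfolding tadd_def using cls_self[OF f] cls_self[OF g] by blast
qed

lemma tneg_cls:
  assumes f: "fm_ok S f"
  shows "tneg S (cls S f) = cls S (\<lambda>p. - f p)"
proof -
  have "cls S (\<lambda>p. - f' p) = cls S (\<lambda>p. - f p)" if "f' \<in> cls S f" for f'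
    using that by (intro eqv_cls) (simp add: cls_def eqv_def)
  then show ?thesis unfolding tneg_def using cls_self[OF f] by blast
qed

lemma tmul_cls:
  assumes f: "fm_ok S f" and g: "fm_ok S g"
  shows "tmul S (cls S f) (cls S g) = cls S (conv f g)"
proof -
  have "cls S (conv f' g') = cls S (conv f g)" if "f' \<in> cls S f" "g' \<in> cls S g" for f' g'
  proof (rule eqv_cls)
    have r: "(\<lambda>p. f p - f' p) \<in> relN S" "(\<lambda>p. g p - g' p) \<in> relN S"
      and ok: "fm_ok S f'" "fm_ok S g'" using that by (auto simp: cls_def)
    have fin: "finite (fsupp f)" "finite (fsupp g)" "finite (fsupp f')" "finite (fsupp g')"
      using ok f g by (auto simp: fm_ok_iff)
    have "conv (\<lambda>p. f p - f' p) g' = (\<lambda>p. conv f g' p - conv f' g' p)"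
      "conv (\<lambda>p. g p - g' p) f = (\<lambda>p. conv f g p - conv f g' p)"
      using fin by (simp_all add: conv_diff_left conv_comm[of _ f])
    with conv_relN_left[OF subfield r(1) ok(2)] conv_relN_left[OF subfield r(2) f]
    have "(\<lambda>p. (conv f g' p - conv f' g' p) + (conv f g p - conv f g' p)) \<in> relN S"
      using relN.plus by fastforce
    from relN_uminus[OF subfield this] show "eqv (conv f' g') (conv f g)"
      by (simp add: eqv_def algebra_simps)
  qed
  then show ?thesis unfolding tmul_def using cls_self[OF f] cls_self[OF g] by blast
qed

lemma tswap_cls:
  assumes f: "fm_ok S f"
  shows "tswap S (cls S f) = cls S (\<lambda>(a, b). f (b, a))"
proof -
  have "cls S (\<lambda>(a, b). f' (b, a)) = cls S (\<lambda>(a, b). f (b, a))" if "f' \<in> cls S f" for f'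
  proof (rule eqv_cls)
    have "(\<lambda>p. f p - f' p) \<in> relN S" using that by (auto simp: cls_def)
    from relN_uminus[OF subfield relN_swap[OF this]]
    show "eqv (\<lambda>(a, b). f' (b, a)) (\<lambda>(a, b). f (b, a))"
      by (simp add: eqv_def case_prod_unfold)
  qed
  then show ?thesis unfolding tswap_def using cls_self[OF f] by blast
qed

lemmas fm_ok_intros = fm_ok_delta[OF subfield] fm_ok_zero[OF subfield] fm_ok_add[OF subfield]
  fm_ok_uminus[OF subfield] fm_ok_conv[OF subfield] fm_ok_swap fm_ok_scale[OF subfield]

lemma tp_in: "tp S a b \<in> tcarrier S"
  by (simp add: tp_def cls_in fm_ok_intros)

lemma tzero_in: "tzero S \<in> tcarrier S"
  by (simp add: tzero_def cls_in fm_ok_intros)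

lemma tone_in: "tone S \<in> tcarrier S"
  by (simp add: tone_def tp_in)

lemma tadd_in: "x \<in> tcarrier S \<Longrightarrow> y \<in> tcarrier S \<Longrightarrow> tadd S x y \<in> tcarrier S"
  by (auto elim!: tcarrierE simp: tadd_cls cls_in fm_ok_intros)

lemma tneg_in: "x \<in> tcarrier S \<Longrightarrow> tneg S x \<in> tcarrier S"
  by (auto elim!: tcarrierE simp: tneg_cls cls_in fm_ok_intros)

lemma tmul_in: "x \<in> tcarrier S \<Longrightarrow> y \<in> tcarrier S \<Longrightarrow> tmul S x y \<in> tcarrier S"
  by (auto elim!: tcarrierE simp: tmul_cls cls_in fm_ok_intros)

lemma tswap_in: "x \<in> tcarrier S \<Longrightarrow> tswap S x \<in> tcarrier S"
  by (auto elim!: tcarrierE simp: tswap_cls cls_in fm_ok_intros)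

lemma tadd_comm: "x \<in> tcarrier S \<Longrightarrow> y \<in> tcarrier S \<Longrightarrow> tadd S x y = tadd S y x"
  by (auto elim!: tcarrierE simp: tadd_cls add.commute)

lemma tadd_assoc:
  "x \<in> tcarrier S \<Longrightarrow> y \<in> tcarrier S \<Longrightarrow> z \<in> tcarrier S \<Longrightarrow>
    tadd S (tadd S x y) z = tadd S x (tadd S y z)"
  by (auto elim!: tcarrierE simp: tadd_cls fm_ok_intros add.assoc)

lemma tadd_zero: "x \<in> tcarrier S \<Longrightarrow> tadd S x (tzero S) = x"
  by (auto elim!: tcarrierE simp: tzero_def tadd_cls fm_ok_intros)

lemma tadd_neg: "x \<in> tcarrier S \<Longrightarrow> tadd S x (tneg S x) = tzero S"
  by (auto elim!: tcarrierE simp: tzero_def tadd_cls tneg_cls fm_ok_intros)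

lemma tsub_self: "x \<in> tcarrier S \<Longrightarrow> tsub S x x = tzero S"
  by (simp add: tsub_def tadd_neg)

lemma tsub_add_cancel: "x \<in> tcarrier S \<Longrightarrow> y \<in> tcarrier S \<Longrightarrow> tadd S (tsub S x y) y = x"
  by (simp add: tsub_def tadd_assoc tneg_in tadd_comm[of "tneg S y" y] tadd_neg tadd_zero)

lemma tmul_comm: "x \<in> tcarrier S \<Longrightarrow> y \<in> tcarrier S \<Longrightarrow> tmul S x y = tmul S y x"
  by (auto elim!: tcarrierE simp: tmul_cls conv_comm fm_ok_finite)

lemma tmul_assoc:
  "x \<in> tcarrier S \<Longrightarrow> y \<in> tcarrier S \<Longrightarrow> z \<in> tcarrier S \<Longrightarrow>
    tmul S (tmul S x y) z = tmul S x (tmul S y z)"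
  by (auto elim!: tcarrierE simp: tmul_cls fm_ok_intros conv_assoc fm_ok_finite)

lemma tmul_left_commute:
  "x \<in> tcarrier S \<Longrightarrow> y \<in> tcarrier S \<Longrightarrow> z \<in> tcarrier S \<Longrightarrow>
    tmul S x (tmul S y z) = tmul S y (tmul S x z)"
  by (metis tmul_assoc tmul_comm)

lemma tone_mul: "x \<in> tcarrier S \<Longrightarrow> tmul S (tone S) x = x"
  by (auto elim!: tcarrierE simp: tone_def tp_def tmul_cls fm_ok_intros conv_one fm_ok_finite)

lemma tmul_one: "x \<in> tcarrier S \<Longrightarrow> tmul S x (tone S) = x"
  using tmul_comm[OF _ tone_in] tone_mul by simp

lemma tzero_mul: "x \<in> tcarrier S \<Longrightarrow> tmul S (tzero S) x = tzero S"
  by (auto elim!: tcarrierE simp: tzero_def tmul_cls fm_ok_intros conv_zero)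

lemma tmul_zero: "x \<in> tcarrier S \<Longrightarrow> tmul S x (tzero S) = tzero S"
  using tmul_comm[OF _ tzero_in] tzero_mul by simp

lemma tmul_add_left:
  "x \<in> tcarrier S \<Longrightarrow> y \<in> tcarrier S \<Longrightarrow> z \<in> tcarrier S \<Longrightarrow>
    tmul S (tadd S x y) z = tadd S (tmul S x z) (tmul S y z)"
  by (auto elim!: tcarrierE simp: tmul_cls tadd_cls fm_ok_intros conv_add_left fm_ok_finite)

lemma tmul_add_right:
  "x \<in> tcarrier S \<Longrightarrow> y \<in> tcarrier S \<Longrightarrow> z \<in> tcarrier S \<Longrightarrow>
    tmul S z (tadd S x y) = tadd S (tmul S z x) (tmul S z y)"
  using tmul_add_left tmul_comm tadd_in by metis

lemma tswap_add:
  assumes "x \<in> tcarrier S" "y \<in> tcarrier S"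
  shows "tswap S (tadd S x y) = tadd S (tswap S x) (tswap S y)"
proof -
  obtain f g where f: "fm_ok S f" "x = cls S f" and g: "fm_ok S g" "y = cls S g"
    using assms by (auto elim!: tcarrierE)
  have "(\<lambda>(a, b). f (b, a) + g (b, a)) = (\<lambda>p. (\<lambda>(a, b). f (b, a)) p + (\<lambda>(a, b). g (b, a)) p)"
    by (auto simp: fun_eq_iff)
  then show ?thesis unfolding f g by (simp add: tadd_cls tswap_cls fm_ok_intros f g)
qed

lemma tswap_mul:
  "x \<in> tcarrier S \<Longrightarrow> y \<in> tcarrier S \<Longrightarrow> tswap S (tmul S x y) = tmul S (tswap S x) (tswap S y)"
  by (auto elim!: tcarrierE simp: tswap_cls tmul_cls fm_ok_intros swap_conv fm_ok_finite)

lemma tswap_tswap: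
  assumes "x \<in> tcarrier S"
  shows "tswap S (tswap S x) = x"
proof -
  obtain f where f: "fm_ok S f" "x = cls S f"
    using assms by (auto elim!: tcarrierE)
  have "(\<lambda>(a, b). (\<lambda>(a, b). f (b, a)) (b, a)) = f" by (auto simp: fun_eq_iff)
  then show ?thesis unfolding f by (simp only: tswap_cls f fm_ok_swap)
qed

lemma tswap_bij: "bij_betw (tswap S) (tcarrier S) (tcarrier S)"
proof (rule bij_betw_imageI)
  show "inj_on (tswap S) (tcarrier S)"
    by (rule inj_onI) (metis tswap_tswap)
  show "tswap S ` tcarrier S = tcarrier S"
    using tswap_in tswap_tswap by (metis image_subset_iff subsetI subset_antisym imageI)
qed

lemma tswap_tp: "tswap S (tp S a b) = tp S b a"
proof -
  have "(\<lambda>(x, y). delta a b (y, x)) = delta b a" by (auto simp: delta_def fun_eq_iff)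
  then show ?thesis by (simp add: tp_def tswap_cls fm_ok_intros)
qed

lemma tswap_zero: "tswap S (tzero S) = tzero S"
  by (simp add: tzero_def tswap_cls fm_ok_intros case_prod_unfold)

lemma tswap_one: "tswap S (tone S) = tone S"
  by (simp add: tone_def tswap_tp)

lemma tp_mul: "tmul S (tp S a b) (tp S c d) = tp S (a * c) (b * d)"
  by (simp add: tp_def tmul_cls fm_ok_intros conv_delta_delta)

lemma tp_add_right: "tp S a (b + b') = tadd S (tp S a b) (tp S a b')"
proof -
  have "eqv (delta a (b + b')) (\<lambda>p. delta a b p + delta a b' p)"
    using relN.add2[of a b b' S] by (simp add: eqv_def algebra_simps)
  then show ?thesis by (simp add: tp_def tadd_cls fm_ok_intros eqv_cls)
qed

lemma tp_zero_right: "tp S a 0 = tzero S"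
  using delta_sum_right[of "{}" a] by (simp add: tp_def tzero_def eqv_cls)

lemma tp_scalar: "c \<in> S \<Longrightarrow> tp S (c * a) b = tp S a (c * b)"
  by (simp add: tp_def eqv_cls delta_scalar_move)

lemma tp_scalar_swap: "c \<in> S \<Longrightarrow> tp S 1 c = tp S c 1"
  using tp_scalar[of c 1 1] by simp

lemma tmul_scalar_cls:
  assumes c: "c \<in> S" and f: "fm_ok S f"
  shows "tmul S (tp S c 1) (cls S f) = cls S (\<lambda>p. c * f p)"
proof -
  have fin: "finite (fsupp f)" and fS: "\<And>q. f q \<in> S" using f by (auto simp: fm_ok_iff)
  have "eqv (\<lambda>p. \<Sum>q\<in>fsupp f. f q * delta (c * fst q) (snd q) p)
      (\<lambda>p. \<Sum>q\<in>fsupp f. f q * (c * delta (fst q) (snd q) p))"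
    using fin fS relN.sc1[OF c] by (intro eqv_sum) (auto simp: eqv_def)
  moreover have "(\<lambda>p. c * f p) = (\<lambda>p. \<Sum>q\<in>fsupp f. f q * (c * delta (fst q) (snd q) p))"
    by (subst fm_expand[OF fin order_refl]) (simp add: sum_distrib_left ac_simps)
  ultimately show ?thesis
    by (simp add: tp_def tmul_cls fm_ok_intros f conv_delta_left fin eqv_cls)
qed

end

section \<open>Linear algebra over a subfield\<close>

definition span_in :: "'a::field set \<Rightarrow> ('j \<Rightarrow> 'a) \<Rightarrow> 'j set \<Rightarrow> 'a set" where
  "span_in S w J = {x. \<exists>c. (\<forall>j\<in>J. c j \<in> S) \<and> x = (\<Sum>j\<in>J. c j * w j)}"

definition dependent_in :: "'a::field set \<Rightarrow> ('i \<Rightarrow> 'a) \<Rightarrow> 'i set \<Rightarrow> bool" where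
  "dependent_in S u I \<longleftrightarrow> (\<exists>c. (\<forall>i\<in>I. c i \<in> S) \<and> (\<exists>i\<in>I. c i \<noteq> 0) \<and> (\<Sum>i\<in>I. c i * u i) = 0)"

lemma dependent_in_insert_elim:
  assumes S: "subfield S" and I: "finite I" "p \<in> I" and t: "\<And>i. i \<in> I \<Longrightarrow> t i \<in> S"
    and dep: "dependent_in S (\<lambda>i. u i - t i * u p) (I - {p})"
  shows "dependent_in S u I"
proof -
  obtain d where d: "\<forall>i\<in>I - {p}. d i \<in> S" "\<exists>i\<in>I - {p}. d i \<noteq> 0"
    "(\<Sum>i\<in>I - {p}. d i * (u i - t i * u p)) = 0"
    using dep by (auto simp: dependent_in_def)
  define c where "c i = (if i = p then - (\<Sum>i\<in>I - {p}. d i * t i) else d i)" for i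
  have "(\<Sum>i\<in>I. c i * u i) = c p * u p + (\<Sum>i\<in>I - {p}. d i * u i)"
    using I by (simp add: sum.remove c_def)
  also have "\<dots> = (\<Sum>i\<in>I - {p}. d i * (u i - t i * u p))"
    by (simp add: c_def right_diff_distrib sum_subtractf sum_distrib_right mult.assoc)
  finally have "(\<Sum>i\<in>I. c i * u i) = 0" using d(3) by simp
  moreover have "\<forall>i\<in>I. c i \<in> S"
    using d(1) t by (auto simp: c_def intro!: subfield_uminus[OF S] subfield_sum[OF S]
        subfield_mult[OF S])
  moreover have "\<exists>i\<in>I. c i \<noteq> 0" using d(2) by (auto simp: c_def)
  ultimately show ?thesis by (auto simp: dependent_in_def)
qed

lemma dependent_in_if_zero:
  assumes S: "subfield S" and "finite I" "i0 \<in> I" "u i0 = 0"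
  shows "dependent_in S u I"
proof -
  have "(\<Sum>i\<in>I. (if i = i0 then 1 else 0) * u i) = (\<Sum>i\<in>I. if i = i0 then u i else 0)"
    by (rule sum.cong) auto
  with assms show ?thesis
    by (auto simp: dependent_in_def subfield_zero[OF S] subfield_one[OF S]
        intro!: exI[of _ "\<lambda>i. if i = i0 then 1 else 0"])
qed

lemma dependent_in_if_card_gt:
  assumes S: "subfield S" and J: "finite J"
  shows "finite I \<Longrightarrow> u ` I \<subseteq> span_in S w J \<Longrightarrow> card J < card I \<Longrightarrow> dependent_in S u I"
  using J
proof (induction J arbitrary: I u rule: finite_induct)
  case empty
  then obtain i0 where "i0 \<in> I" by fastforce
  with empty.prems show ?case by (intro dependent_in_if_zero[OF S]) (auto simp: span_in_def)
next
  case (insert j J)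
  obtain C where C: "\<And>i. i \<in> I \<Longrightarrow> \<forall>j'\<in>insert j J. C i j' \<in> S"
    and u: "\<And>i. i \<in> I \<Longrightarrow> u i = C i j * w j + (\<Sum>j'\<in>J. C i j' * w j')"
    using insert.prems(2) insert.hyps unfolding span_in_def by (auto simp: image_subset_iff) metis
  show ?case
  proof (cases "\<forall>i\<in>I. C i j = 0")
    case True
    then have "u ` I \<subseteq> span_in S w J" using C u by (auto simp: span_in_def)
    with insert show ?thesis by simp
  next
    case False
    then obtain p where p: "p \<in> I" "C p j \<noteq> 0" by blast
    define t where "t i = C i j / C p j" for i
    have "(\<lambda>i. u i - t i * u p) ` (I - {p}) \<subseteq> span_in S w J"
    proof (clarsimp simp: span_in_def)
      fix i assume i: "i \<in> I" "i \<noteq> p"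
      have "u i - t i * u p = (\<Sum>j'\<in>J. (C i j' - t i * C p j') * w j')"
        using u[OF i(1)] u[OF p(1)] p(2)
        by (simp add: t_def algebra_simps sum_distrib_left sum_subtractf)
      moreover have "\<forall>j'\<in>J. C i j' - t i * C p j' \<in> S"
        using C i(1) p(1) by (auto simp: t_def intro!: subfield_diff[OF S] subfield_mult[OF S]
            subfield_divide[OF S])
      ultimately show "\<exists>c. (\<forall>j\<in>J. c j \<in> S) \<and> u i - t i * u p = (\<Sum>j\<in>J. c j * w j)"
        by (intro exI[of _ "\<lambda>j'. C i j' - t i * C p j'"]) simp
    qed
    moreover have "card J < card (I - {p})"
      using insert.prems(1,3) insert.hyps p(1) by simp
    ultimately have "dependent_in S (\<lambda>i. u i - t i * u p) (I - {p})"
      using insert.IH insert.prems(1) by simp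
    moreover have "t i \<in> S" if "i \<in> I" for i
      using C p that by (auto simp: t_def subfield_divide[OF S])
    ultimately show ?thesis by (rule dependent_in_insert_elim[OF S insert.prems(1) p(1), rotated])
  qed
qed

section \<open>Discrete valuations\<close>

locale discretely_valued =
  fixes v :: "'a::field \<Rightarrow> int"
  assumes discrete_valuation: "discrete_valuation v"
begin

lemma v_mult: "x \<noteq> 0 \<Longrightarrow> y \<noteq> 0 \<Longrightarrow> v (x * y) = v x + v y"
  using discrete_valuation by (simp add: discrete_valuation_def)

lemma v_add: "x \<noteq> 0 \<Longrightarrow> y \<noteq> 0 \<Longrightarrow> x + y \<noteq> 0 \<Longrightarrow> min (v x) (v y) \<le> v (x + y)"
  using discrete_valuation by (simp add: discrete_valuation_def)

lemma v_surj: "\<exists>x. x \<noteq> 0 \<and> v x = k"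
  using discrete_valuation by (simp add: discrete_valuation_def)

lemma v_one: "v 1 = 0"
  using v_mult[of 1 1] by simp

lemma v_uminus: "x \<noteq> 0 \<Longrightarrow> v (- x) = v x"
proof -
  have "v (- 1) = 0" using v_mult[of "- 1" "- 1"] by (simp add: v_one)
  then show "x \<noteq> 0 \<Longrightarrow> v (- x) = v x" using v_mult[of "- 1" x] by simp
qed

lemma v_inverse: "x \<noteq> 0 \<Longrightarrow> v (inverse x) = - v x"
  using v_mult[of x "inverse x"] by (simp add: v_one)

lemma v_power: "x \<noteq> 0 \<Longrightarrow> v (x ^ k) = int k * v x"
  by (induction k) (auto simp: v_one v_mult algebra_simps)

lemma v_add_strict:
  assumes "x \<noteq> 0" "y \<noteq> 0" "v x < v y"
  shows "x + y \<noteq> 0 \<and> v (x + y) = v x"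
proof -
  have xy: "x + y \<noteq> 0"
    using assms v_uminus[of x] by (auto simp: add_eq_0_iff)
  have "min (v (x + y)) (v (- y)) \<le> v x"
    using v_add[OF xy, of "- y"] assms by auto
  then show ?thesis using v_add[OF assms(1,2) xy] assms xy by (auto simp: v_uminus)
qed

lemma mpow_zero [simp]: "0 \<in> mpow v j"
  by (simp add: mpow_def)

lemma mpow_v: "x \<in> mpow v (v x)"
  by (simp add: mpow_def)

lemma mpow_add: "x \<in> mpow v j \<Longrightarrow> y \<in> mpow v j \<Longrightarrow> x + y \<in> mpow v j"
  using v_add[of x y] by (fastforce simp: mpow_def)

lemma mpow_uminus: "x \<in> mpow v j \<Longrightarrow> - x \<in> mpow v j"
  by (cases "x = 0") (auto simp: mpow_def v_uminus)

lemma mpow_diff: "x \<in> mpow v j \<Longrightarrow> y \<in> mpow v j \<Longrightarrow> x - y \<in> mpow v j"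
  using mpow_add[of x j "- y"] mpow_uminus[of y j] by simp

lemma mpow_mult: "x \<in> mpow v j \<Longrightarrow> y \<in> mpow v k \<Longrightarrow> x * y \<in> mpow v (j + k)"
  by (cases "x = 0"; cases "y = 0") (auto simp: mpow_def v_mult)

lemma mpow_mono: "j \<le> k \<Longrightarrow> x \<in> mpow v k \<Longrightarrow> x \<in> mpow v j"
  by (auto simp: mpow_def)

lemma mpow_sum: "(\<And>i. i \<in> I \<Longrightarrow> f i \<in> mpow v j) \<Longrightarrow> sum f I \<in> mpow v j"
  by (induction I rule: infinite_finite_induct) (auto intro: mpow_add)

lemma mpow_inverse: "x \<noteq> 0 \<Longrightarrow> inverse x \<in> mpow v (- v x)"
  by (simp add: mpow_def v_inverse)

lemma mpow_mult_inverse: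
  assumes "y \<noteq> 0" "x * y \<in> mpow v j"
  shows "x \<in> mpow v (j - v y)"
proof -
  have "x * y * inverse y \<in> mpow v (j + - v y)"
    using mpow_mult[OF assms(2) mpow_inverse[OF assms(1)]] .
  then show ?thesis using assms(1) by (simp add: mult.assoc)
qed

lemma vring_iff_mpow: "x \<in> vring v \<longleftrightarrow> x \<in> mpow v 0"
  by (simp add: vring_def)

lemma mpow_one_vring: "x \<in> mpow v 1 \<Longrightarrow> x \<in> vring v"
  by (auto simp: vring_def mpow_def)

lemma sum_distinct_valuations:
  assumes "finite L"
    and "\<And>l l'. l \<in> L \<Longrightarrow> l' \<in> L \<Longrightarrow> t l \<noteq> 0 \<Longrightarrow> t l' \<noteq> 0 \<Longrightarrow> l \<noteq> l' \<Longrightarrow> v (t l) \<noteq> v (t l')"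
    and "\<exists>l\<in>L. t l \<noteq> 0"
  shows "sum t L \<noteq> 0 \<and> (\<exists>l\<in>L. t l \<noteq> 0 \<and> v (sum t L) = v (t l))
    \<and> (\<forall>l\<in>L. t l \<noteq> 0 \<longrightarrow> v (sum t L) \<le> v (t l))"
  using assms
proof (induction L rule: finite_induct)
  case (insert a F)
  show ?case
  proof (cases "\<exists>l\<in>F. t l \<noteq> 0")
    case False
    then show ?thesis using insert by auto
  next
    case True
    with insert have IH: "sum t F \<noteq> 0" "\<exists>l\<in>F. t l \<noteq> 0 \<and> v (sum t F) = v (t l)"
      "\<forall>l\<in>F. t l \<noteq> 0 \<longrightarrow> v (sum t F) \<le> v (t l)" by blast+
    then obtain l1 where l1: "l1 \<in> F" "t l1 \<noteq> 0" "v (sum t F) = v (t l1)" by blast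
    show ?thesis
    proof (cases "t a = 0")
      case False
      then have "v (t a) \<noteq> v (sum t F)" using insert.prems(1)[of a l1] l1 insert.hyps by auto
      then consider "v (t a) < v (sum t F)" | "v (sum t F) < v (t a)" by linarith
      then show ?thesis
      proof cases
        case 1
        with v_add_strict[OF False IH(1)] show ?thesis using IH insert.hyps by fastforce
      next
        case 2
        with v_add_strict[OF IH(1) False] show ?thesis
          using IH l1 insert.hyps by (fastforce simp: add.commute)
      qed
    qed (use IH insert.hyps in auto)
  qed
qed simp

end

section \<open>The basis of powers of a uniformizer\<close>

locale totally_ramified = tensor_ring S + discretely_valued v
  for S :: "'a::field set" and v :: "'a \<Rightarrow> int" +
  fixes n :: nat and \<pi> :: 'a
  assumes ext_degree: "ext_degree S n"
    and value_group: "{v x | x. x \<in> S \<and> x \<noteq> 0} = {int n * z | z. True}"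
    and pi_nonzero: "\<pi> \<noteq> 0" and v_pi: "v \<pi> = 1"
begin

lemma dvd_v_subfield:
  assumes "x \<in> S" "x \<noteq> 0"
  shows "int n dvd v x"
proof -
  have "v x \<in> {v x | x. x \<in> S \<and> x \<noteq> 0}" using assms by blast
  then show ?thesis using value_group by auto
qed

lemma n_pos: "0 < n"
proof -
  obtain b :: "nat \<Rightarrow> 'a" and c where "(1::'a) = (\<Sum>i<n. c i * b i)"
    using ext_degree unfolding ext_degree_def by blast
  then show ?thesis by (cases n) auto
qed

lemma pi_power_nonzero: "\<pi> ^ l \<noteq> 0"
  using pi_nonzero by simp

lemma v_pi_power: "v (\<pi> ^ l) = int l"
  using v_power[OF pi_nonzero] v_pi by simp

lemma pi_power_mpow: "\<pi> ^ l \<in> mpow v (int l)"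
  by (simp add: mpow_def v_pi_power)

lemma v_pi_term_mod:
  assumes "c \<in> S" "c \<noteq> 0" "l < n"
  shows "v (c * \<pi> ^ l) mod int n = int l"
proof -
  obtain z where "v c = int n * z" using dvd_v_subfield[OF assms(1,2)] by (auto elim: dvdE)
  then show ?thesis using assms(2,3) by (simp add: v_mult[OF _ pi_power_nonzero] v_pi_power)
qed

lemma pi_terms_distinct_valuations:
  assumes "\<forall>l<n. c l \<in> S" "l < n" "l' < n" "c l * \<pi> ^ l \<noteq> 0" "c l' * \<pi> ^ l' \<noteq> 0" "l \<noteq> l'"
  shows "v (c l * \<pi> ^ l) \<noteq> v (c l' * \<pi> ^ l')"
proof -
  have "v (c l * \<pi> ^ l) mod int n = int l" "v (c l' * \<pi> ^ l') mod int n = int l'"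
    using assms by (auto intro!: v_pi_term_mod)
  then show ?thesis using assms(6) by auto
qed

lemma pi_powers_independent:
  assumes "\<forall>l<n. c l \<in> S" "(\<Sum>l<n. c l * \<pi> ^ l) = 0"
  shows "\<forall>l<n. c l = 0"
proof (rule ccontr)
  assume "\<not> (\<forall>l<n. c l = 0)"
  then have "\<exists>l\<in>{..<n}. c l * \<pi> ^ l \<noteq> 0" using pi_nonzero by auto
  with sum_distinct_valuations[OF finite_lessThan pi_terms_distinct_valuations[OF assms(1)]]
  have "(\<Sum>l<n. c l * \<pi> ^ l) \<noteq> 0" by simp
  with assms(2) show False by contradiction
qed

lemma pi_powers_span: "\<exists>c. (\<forall>l<n. c l \<in> S) \<and> x = (\<Sum>l<n. c l * \<pi> ^ l)"
proof -
  obtain b :: "nat \<Rightarrow> 'a" where b: "\<forall>x. \<exists>c. (\<forall>i<n. c i \<in> S) \<and> x = (\<Sum>i<n. c i * b i)"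
    using ext_degree unfolding ext_degree_def by blast
  have span: "y \<in> span_in S b {..<n}" for y
    using b[rule_format, of y] by (auto simp: span_in_def)
  define u where "u l = (if l < n then \<pi> ^ l else x)" for l
  have "dependent_in S u {..n}"
    by (rule dependent_in_if_card_gt[OF subfield finite_lessThan[of n] finite_atMost, where w = b])
      (simp_all add: span image_subset_iff)
  then obtain c where c: "\<forall>i\<in>{..n}. c i \<in> S" "\<exists>i\<in>{..n}. c i \<noteq> 0"
    "(\<Sum>i\<in>{..n}. c i * u i) = 0"
    by (auto simp: dependent_in_def)
  have sum: "(\<Sum>i<n. c i * \<pi> ^ i) + c n * x = 0"
    using c(3) by (simp add: lessThan_Suc_atMost[symmetric] u_def)
  have "c n \<noteq> 0"
  proof
    assume "c n = 0"
    with sum have "(\<Sum>i<n. c i * \<pi> ^ i) = 0" by simp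
    with pi_powers_independent[of c] c(1) have "\<forall>l<n. c l = 0" by simp
    with c(2) \<open>c n = 0\<close> show False by (auto simp: le_less)
  qed
  have "c n * x = - (\<Sum>i<n. c i * \<pi> ^ i)"
    using sum by (simp add: eq_neg_iff_add_eq_0 add.commute)
  with \<open>c n \<noteq> 0\<close> have "x = (\<Sum>l<n. (- c l / c n) * \<pi> ^ l)"
    by (simp add: field_simps sum_divide_distrib[symmetric] sum_negf)
  moreover have "\<forall>l<n. - c l / c n \<in> S"
    using c(1) by (auto intro!: subfield_divide[OF subfield] subfield_uminus[OF subfield])
  ultimately show ?thesis by (intro exI[of _ "\<lambda>l. - c l / c n"]) simp
qed

definition coord :: "'a \<Rightarrow> nat \<Rightarrow> 'a" where
  "coord x = (SOME c. (\<forall>l<n. c l \<in> S) \<and> x = (\<Sum>l<n. c l * \<pi> ^ l))"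

lemma coord_spec: "(\<forall>l<n. coord x l \<in> S) \<and> x = (\<Sum>l<n. coord x l * \<pi> ^ l)"
  unfolding coord_def by (rule someI_ex[OF pi_powers_span])

lemma coord_in_subfield: "l < n \<Longrightarrow> coord x l \<in> S"
  using coord_spec by blast

lemma sum_coord: "(\<Sum>l<n. coord x l * \<pi> ^ l) = x"
  using coord_spec[of x] by (rule sym[OF conjunct2])

lemma coord_unique:
  assumes "\<forall>l<n. c l \<in> S" "x = (\<Sum>l<n. c l * \<pi> ^ l)" "l < n"
  shows "coord x l = c l"
proof -
  have "(\<Sum>l<n. coord x l * \<pi> ^ l) = (\<Sum>l<n. c l * \<pi> ^ l)"
    unfolding sum_coord by (rule assms(2))
  then have "(\<Sum>l<n. (coord x l - c l) * \<pi> ^ l) = 0"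
    by (simp add: algebra_simps sum_subtractf)
  with pi_powers_independent[of "\<lambda>l. coord x l - c l"] assms(1,3) show ?thesis
    by (auto intro: subfield_diff[OF subfield] coord_in_subfield)
qed

lemma coord_add: "l < n \<Longrightarrow> coord (x + y) l = coord x l + coord y l"
  by (rule coord_unique)
    (auto intro: subfield_add[OF subfield] coord_in_subfield
      simp: distrib_right sum.distrib sum_coord)

lemma coord_scale: "s \<in> S \<Longrightarrow> l < n \<Longrightarrow> coord (s * x) l = s * coord x l"
  by (rule coord_unique)
    (auto intro: subfield_mult[OF subfield] coord_in_subfield
      simp: sum_distrib_left[symmetric] mult.assoc sum_coord)

lemma coord_zero: "l < n \<Longrightarrow> coord 0 l = 0"
  using coord_scale[of 0 l 0] subfield_zero[OF subfield] by simp

lemma coord_pi_power: "k < n \<Longrightarrow> l < n \<Longrightarrow> coord (\<pi> ^ k) l = (if l = k then 1 else 0)"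
proof (rule coord_unique)
  assume k: "k < n"
  have "(\<Sum>l<n. (if l = k then 1 else 0) * \<pi> ^ l) = (\<Sum>l<n. if l = k then \<pi> ^ l else 0)"
    by (rule sum.cong) auto
  with k show "\<pi> ^ k = (\<Sum>l<n. (if l = k then 1 else 0) * \<pi> ^ l)" by simp
qed (simp add: subfield_zero[OF subfield] subfield_one[OF subfield])

lemma coord_terms_valuation:
  assumes x: "x \<noteq> 0"
  defines "l0 \<equiv> nat (v x mod int n)"
  shows "l0 < n" "coord x l0 \<noteq> 0" "v (coord x l0 * \<pi> ^ l0) = v x"
    "\<And>l. l < n \<Longrightarrow> coord x l * \<pi> ^ l \<in> mpow v (v x)"
    "\<And>l. l < n \<Longrightarrow> l \<noteq> l0 \<Longrightarrow> coord x l * \<pi> ^ l \<in> mpow v (v x + 1)"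
proof -
  have "\<exists>l\<in>{..<n}. coord x l * \<pi> ^ l \<noteq> 0"
  proof (rule ccontr)
    assume "\<not> ?thesis"
    then have "(\<Sum>l<n. coord x l * \<pi> ^ l) = 0" by (intro sum.neutral) blast
    with x show False by (simp add: sum_coord)
  qed
  from sum_distinct_valuations[OF finite_lessThan _ this] pi_terms_distinct_valuations[of "coord x"]
  obtain l1 where l1: "l1 < n" "coord x l1 * \<pi> ^ l1 \<noteq> 0" "v x = v (coord x l1 * \<pi> ^ l1)"
    and le: "\<forall>l<n. coord x l * \<pi> ^ l \<noteq> 0 \<longrightarrow> v x \<le> v (coord x l * \<pi> ^ l)"
    by (auto simp: sum_coord coord_in_subfield)
  have "v x mod int n = int l1"
    using l1 v_pi_term_mod[OF coord_in_subfield[OF l1(1)] _ l1(1)] by auto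
  then have l10: "l1 = l0" unfolding l0_def by simp
  show "l0 < n" "coord x l0 \<noteq> 0" "v (coord x l0 * \<pi> ^ l0) = v x" using l1 l10 by auto
  show "coord x l * \<pi> ^ l \<in> mpow v (v x)" if "l < n" for l
    using le that by (auto simp: mpow_def)
  show "coord x l * \<pi> ^ l \<in> mpow v (v x + 1)" if "l < n" "l \<noteq> l0" for l
  proof (cases "coord x l * \<pi> ^ l = 0")
    case False
    then have "v (coord x l * \<pi> ^ l) mod int n = int l"
      using v_pi_term_mod[OF coord_in_subfield[OF that(1)] _ that(1)] by auto
    then have "v (coord x l * \<pi> ^ l) \<noteq> v x"
      using \<open>v x mod int n = int l1\<close> l10 that by auto
    then show ?thesis using le that False by (auto simp: mpow_def)
  qed (metis mpow_zero)
qed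

lemma pi_power_mult_mpow_iff: "\<pi> ^ l * x \<in> mpow v j \<longleftrightarrow> x \<in> mpow v (j - int l)"
proof
  assume "\<pi> ^ l * x \<in> mpow v j"
  then show "x \<in> mpow v (j - int l)"
    using mpow_mult_inverse[of "\<pi> ^ l" x j, OF pi_power_nonzero] by (simp add: v_pi_power mult.commute)
next
  assume "x \<in> mpow v (j - int l)"
  from mpow_mult[OF pi_power_mpow[of l] this] show "\<pi> ^ l * x \<in> mpow v j" by simp
qed

lemma coord_mpow: "x \<in> mpow v j \<Longrightarrow> l < n \<Longrightarrow> coord x l \<in> mpow v (j - int l)"
proof (cases "x = 0")
  case False
  assume "x \<in> mpow v j" "l < n"
  then have "\<pi> ^ l * coord x l \<in> mpow v j"
    using mpow_mono[OF _ coord_terms_valuation(4)[OF False]] False by (auto simp: mpow_def mult.commute)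
  then show ?thesis by (simp add: pi_power_mult_mpow_iff)
qed (simp add: coord_zero)

lemma coord_leading_term:
  assumes x: "x \<noteq> 0"
  shows "x - coord x (nat (v x mod int n)) * \<pi> ^ nat (v x mod int n) \<in> mpow v (v x + 1)"
proof -
  let ?l0 = "nat (v x mod int n)"
  have "x - coord x ?l0 * \<pi> ^ ?l0 = (\<Sum>l\<in>{..<n} - {?l0}. coord x l * \<pi> ^ l)"
    using coord_terms_valuation(1)[OF x] sum_coord[of x] by (simp add: sum.remove diff_eq_eq add.commute)
  also have "\<dots> \<in> mpow v (v x + 1)"
    by (rule mpow_sum) (use coord_terms_valuation(5)[OF x] in auto)
  finally show ?thesis .
qed

end

section \<open>Coordinates on \<open>K' \<otimes> K'\<close> and the filtration\<close>

context totally_ramified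
begin

text \<open>The coordinates are first defined on the free module and shown to vanish on the relations.\<close>

definition fm_coord :: "'a fm \<Rightarrow> nat \<Rightarrow> 'a" where
  "fm_coord f l = (\<Sum>p\<in>fsupp f. f p * (coord (fst p) l * snd p))"

lemma fm_coord_eq:
  assumes "finite A" "fsupp f \<subseteq> A"
  shows "fm_coord f l = (\<Sum>p\<in>A. f p * (coord (fst p) l * snd p))"
  unfolding fm_coord_def by (rule sum.mono_neutral_left) (use assms in \<open>auto simp: fsupp_def\<close>)

lemma fm_coord_add:
  assumes "finite (fsupp f)" "finite (fsupp g)"
  shows "fm_coord (\<lambda>p. f p + g p) l = fm_coord f l + fm_coord g l"
proof -
  let ?A = "fsupp f \<union> fsupp g"
  have "fsupp (\<lambda>p. f p + g p) \<subseteq> ?A" "fsupp f \<subseteq> ?A" "fsupp g \<subseteq> ?A" by (auto simp: fsupp_def)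
  with assms show ?thesis by (simp add: fm_coord_eq[of ?A] distrib_right sum.distrib)
qed

lemma fm_coord_scale: "finite (fsupp f) \<Longrightarrow> fm_coord (\<lambda>p. c * f p) l = c * fm_coord f l"
  using fm_coord_eq[of "fsupp f" "\<lambda>p. c * f p" l]
  by (auto simp: fsupp_def fm_coord_def sum_distrib_left mult.assoc)

lemma fm_coord_uminus: "finite (fsupp f) \<Longrightarrow> fm_coord (\<lambda>p. - f p) l = - fm_coord f l"
  using fm_coord_scale[of f "- 1" l] by simp

lemma fm_coord_diff:
  "finite (fsupp f) \<Longrightarrow> finite (fsupp g) \<Longrightarrow> fm_coord (\<lambda>p. f p - g p) l = fm_coord f l - fm_coord g l"
  using fm_coord_add[of f "\<lambda>p. - g p" l] fm_coord_uminus[of g l] by simp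

lemma fm_coord_delta: "fm_coord (delta a b) l = coord a l * b"
  using fm_coord_eq[of "{(a, b)}" "delta a b" l] by (simp add: fsupp_def delta_def)

lemma fm_coord_zero: "fm_coord (\<lambda>_. 0) l = 0"
  by (simp add: fm_coord_def fsupp_def)

lemma fm_coord_relN:
  assumes "r \<in> relN S" "l < n"
  shows "fm_coord r l = 0"
  using assms(1)
proof induction
  case (plus f g)
  then show ?case by (simp add: fm_coord_add relN_finite[OF subfield])
next
  case (smult c f)
  then show ?case by (simp add: fm_coord_scale relN_finite[OF subfield])
qed (use assms(2) in \<open>simp_all add: fm_coord_zero fm_coord_diff fm_coord_add fm_coord_scale
  fm_coord_delta coord_add coord_scale algebra_simps\<close>)

definition tcoord :: "'a tens \<Rightarrow> nat \<Rightarrow> 'a" where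
  "tcoord x l = fm_coord (SOME f. f \<in> x) l"

lemma tcoord_cls:
  assumes f: "fm_ok S f" and l: "l < n"
  shows "tcoord (cls S f) l = fm_coord f l"
proof -
  let ?g = "SOME g. g \<in> cls S f"
  have "?g \<in> cls S f" by (rule someI[of "\<lambda>g. g \<in> cls S f", OF cls_self[OF f]])
  then have r: "(\<lambda>p. f p - ?g p) \<in> relN S" and g: "fm_ok S ?g" by (auto simp: cls_def)
  from fm_coord_relN[OF r l] show ?thesis
    using f g by (simp add: tcoord_def fm_coord_diff fm_ok_finite)
qed

lemma tcoord_tadd:
  "x \<in> tcarrier S \<Longrightarrow> y \<in> tcarrier S \<Longrightarrow> l < n \<Longrightarrow> tcoord (tadd S x y) l = tcoord x l + tcoord y l"
  by (auto elim!: tcarrierE simp: tadd_cls tcoord_cls fm_ok_intros fm_coord_add fm_ok_finite)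

lemma tcoord_tneg: "x \<in> tcarrier S \<Longrightarrow> l < n \<Longrightarrow> tcoord (tneg S x) l = - tcoord x l"
  by (auto elim!: tcarrierE simp: tneg_cls tcoord_cls fm_ok_intros fm_coord_uminus fm_ok_finite)

lemma tcoord_tp: "l < n \<Longrightarrow> tcoord (tp S a b) l = coord a l * b"
  by (simp add: tp_def tcoord_cls fm_ok_intros fm_coord_delta)

lemma tcoord_tzero: "l < n \<Longrightarrow> tcoord (tzero S) l = 0"
  by (simp add: tzero_def tcoord_cls fm_ok_intros fm_coord_zero)

lemma tcoord_scalar:
  "c \<in> S \<Longrightarrow> x \<in> tcarrier S \<Longrightarrow> l < n \<Longrightarrow> tcoord (tmul S (tp S c 1) x) l = c * tcoord x l"
  by (auto elim!: tcarrierE simp: tmul_scalar_cls tcoord_cls fm_ok_intros fm_coord_scale fm_ok_finite)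

lemma tsum_in: "(\<And>k. k < m \<Longrightarrow> y k \<in> tcarrier S) \<Longrightarrow> tsum S y m \<in> tcarrier S"
  by (induction m) (auto simp: tzero_in tadd_in)

lemma tsum_cong: "(\<And>k. k < m \<Longrightarrow> y k = z k) \<Longrightarrow> tsum S y m = tsum S z m"
  by (induction m) auto

lemma tcoord_tsum:
  "(\<And>k. k < m \<Longrightarrow> y k \<in> tcarrier S) \<Longrightarrow> l < n \<Longrightarrow> tcoord (tsum S y m) l = (\<Sum>k<m. tcoord (y k) l)"
  by (induction m) (auto simp: tcoord_tzero tcoord_tadd tsum_in)

definition fm_normalize :: "'a fm \<Rightarrow> 'a fm" where
  "fm_normalize f = (\<lambda>p. \<Sum>l<n. delta (\<pi> ^ l) (fm_coord f l) p)"

lemma eqv_delta_normalize: "eqv (delta a b) (\<lambda>p. \<Sum>l<n. delta (\<pi> ^ l) (coord a l * b) p)"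
proof -
  have "eqv (delta (\<Sum>l<n. coord a l * \<pi> ^ l) b) (\<lambda>p. \<Sum>l<n. delta (coord a l * \<pi> ^ l) b p)"
    by (rule delta_sum_left) simp
  moreover have "eqv (\<lambda>p. \<Sum>l<n. delta (coord a l * \<pi> ^ l) b p)
      (\<lambda>p. \<Sum>l<n. delta (\<pi> ^ l) (coord a l * b) p)"
    by (rule eqv_sum_unweighted) (auto intro: delta_scalar_move coord_in_subfield)
  ultimately show ?thesis by (auto simp: sum_coord dest: eqv_trans)
qed

lemma eqv_fm_normalize:
  assumes f: "fm_ok S f"
  shows "eqv f (fm_normalize f)"
proof -
  let ?A = "fsupp f"
  have fin: "finite ?A" and fS: "\<And>q. f q \<in> S" using f by (auto simp: fm_ok_iff)
  have "eqv (\<lambda>p. \<Sum>q\<in>?A. f q * delta (fst q) (snd q) p)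
      (\<lambda>p. \<Sum>q\<in>?A. f q * (\<Sum>l<n. delta (\<pi> ^ l) (coord (fst q) l * snd q) p))"
    by (rule eqv_sum[OF fin]) (auto simp: fS eqv_delta_normalize)
  also have "(\<lambda>p. \<Sum>q\<in>?A. f q * (\<Sum>l<n. delta (\<pi> ^ l) (coord (fst q) l * snd q) p))
      = (\<lambda>p. \<Sum>l<n. \<Sum>q\<in>?A. f q * delta (\<pi> ^ l) (coord (fst q) l * snd q) p)"
    by (simp add: sum_distrib_left sum.swap[of _ ?A])
  finally have 1: "eqv f (\<lambda>p. \<Sum>l<n. \<Sum>q\<in>?A. f q * delta (\<pi> ^ l) (coord (fst q) l * snd q) p)"
    by (subst fm_expand[OF fin order_refl])
  have "eqv (delta (\<pi> ^ l) (fm_coord f l))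
      (\<lambda>p. \<Sum>q\<in>?A. f q * delta (\<pi> ^ l) (coord (fst q) l * snd q) p)" for l
  proof -
    have "eqv (delta (\<pi> ^ l) (fm_coord f l))
        (\<lambda>p. \<Sum>q\<in>?A. delta (\<pi> ^ l) (f q * (coord (fst q) l * snd q)) p)"
      unfolding fm_coord_def by (rule delta_sum_right[OF fin])
    moreover have "eqv (\<lambda>p. \<Sum>q\<in>?A. delta (\<pi> ^ l) (f q * (coord (fst q) l * snd q)) p)
        (\<lambda>p. \<Sum>q\<in>?A. f q * delta (\<pi> ^ l) (coord (fst q) l * snd q) p)"
      by (rule eqv_sum_unweighted[OF fin]) (auto intro: delta_scalar_right fS)
    ultimately show ?thesis by (rule eqv_trans)
  qed
  then have "eqv (fm_normalize f)
      (\<lambda>p. \<Sum>l<n. \<Sum>q\<in>?A. f q * delta (\<pi> ^ l) (coord (fst q) l * snd q) p)"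
    unfolding fm_normalize_def by (intro eqv_sum_unweighted) auto
  with 1 show ?thesis by (auto dest: eqv_trans eqv_sym)
qed

lemma tcoord_inject:
  assumes x: "x \<in> tcarrier S" and y: "y \<in> tcarrier S"
    and eq: "\<And>l. l < n \<Longrightarrow> tcoord x l = tcoord y l"
  shows "x = y"
proof -
  obtain f g where f: "fm_ok S f" "x = cls S f" and g: "fm_ok S g" "y = cls S g"
    using x y by (auto elim!: tcarrierE)
  have "fm_normalize f = fm_normalize g"
    unfolding fm_normalize_def using eq f g by (auto simp: tcoord_cls)
  then show ?thesis
    using eqv_cls[OF eqv_fm_normalize[OF f(1)]] eqv_cls[OF eqv_fm_normalize[OF g(1)]] f g by simp
qed

definition tens_of_coord :: "(nat \<Rightarrow> 'a) \<Rightarrow> 'a tens" where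
  "tens_of_coord b = tsum S (\<lambda>l. tp S (\<pi> ^ l) (b l)) n"

lemma tens_of_coord_in: "tens_of_coord b \<in> tcarrier S"
  by (simp add: tens_of_coord_def tsum_in tp_in)

lemma tcoord_tens_of_coord: "l < n \<Longrightarrow> tcoord (tens_of_coord b) l = b l"
proof -
  assume l: "l < n"
  have "tcoord (tens_of_coord b) l = (\<Sum>k<n. coord (\<pi> ^ k) l * b k)"
    by (simp add: tens_of_coord_def tcoord_tsum tp_in tcoord_tp l)
  also have "\<dots> = (\<Sum>k<n. if k = l then b k else 0)"
    by (rule sum.cong) (auto simp: coord_pi_power l)
  finally show ?thesis using l by simp
qed

lemma tens_of_coord_tcoord: "x \<in> tcarrier S \<Longrightarrow> tens_of_coord (tcoord x) = x"
  by (rule tcoord_inject) (auto simp: tens_of_coord_in tcoord_tens_of_coord)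

abbreviation X :: "int \<Rightarrow> 'a tens set" where
  "X i \<equiv> Xfil S v i"

lemma ospan_in: "x \<in> ospan S v G \<Longrightarrow> G \<subseteq> tcarrier S \<Longrightarrow> x \<in> tcarrier S"
  by (induction rule: ospan.induct) (auto simp: tzero_in tadd_in tmul_in tp_in)

lemma X_in: "x \<in> X i \<Longrightarrow> x \<in> tcarrier S"
  unfolding Xfil_def by (erule ospan_in) (auto simp: tp_in)

lemma X_gen: "a \<in> mpow v j \<Longrightarrow> b \<in> mpow v (i - j) \<Longrightarrow> tp S a b \<in> X i"
  unfolding Xfil_def by (rule ospan.gen) blast

lemma X0_gen: "a \<in> mpow v j \<Longrightarrow> b \<in> mpow v (- j) \<Longrightarrow> tp S a b \<in> X 0"
  using X_gen[of a j b 0] by simp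

lemma X_zero: "tzero S \<in> X i"
  unfolding Xfil_def by (rule ospan.zero)

lemma X_add: "x \<in> X i \<Longrightarrow> y \<in> X i \<Longrightarrow> tadd S x y \<in> X i"
  unfolding Xfil_def by (rule ospan.add)

lemma X_scalar: "c \<in> S \<Longrightarrow> c \<in> vring v \<Longrightarrow> x \<in> X i \<Longrightarrow> tmul S (tp S c 1) x \<in> X i"
  unfolding Xfil_def by (rule ospan.smult)

lemma X_induct [consumes 1, case_names zero gen add scalar]:
  assumes "x \<in> X i"
    and "P (tzero S)"
    and "\<And>j a b. a \<in> mpow v j \<Longrightarrow> b \<in> mpow v (i - j) \<Longrightarrow> P (tp S a b)"
    and "\<And>x y. x \<in> X i \<Longrightarrow> y \<in> X i \<Longrightarrow> P x \<Longrightarrow> P y \<Longrightarrow> P (tadd S x y)"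
    and "\<And>c x. c \<in> S \<Longrightarrow> c \<in> vring v \<Longrightarrow> x \<in> X i \<Longrightarrow> P x \<Longrightarrow> P (tmul S (tp S c 1) x)"
  shows "P x"
  using assms(1) unfolding Xfil_def
  by induction (use assms(2-) in \<open>auto simp: Xfil_def\<close>)

lemma tcoord_X: "x \<in> X i \<Longrightarrow> l < n \<Longrightarrow> tcoord x l \<in> mpow v (i - int l)"
proof (induction rule: X_induct)
  case (gen j a b)
  have "coord a l * b \<in> mpow v ((j - int l) + (i - j))"
    by (rule mpow_mult[OF coord_mpow[OF gen(1,3)] gen(2)])
  then show ?case using gen by (simp add: tcoord_tp)
next
  case (scalar c x)
  have "c * tcoord x l \<in> mpow v (0 + (i - int l))"
    using scalar by (intro mpow_mult) (auto simp: vring_iff_mpow)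
  then show ?case using scalar X_in by (simp add: tcoord_scalar)
qed (auto simp: tcoord_tzero tcoord_tadd X_in intro!: mpow_add)

lemma tsum_X: "(\<And>k. k < m \<Longrightarrow> y k \<in> X i) \<Longrightarrow> tsum S y m \<in> X i"
  by (induction m) (auto simp: X_zero X_add)

lemma tens_of_coord_X: "(\<And>l. l < n \<Longrightarrow> b l \<in> mpow v (i - int l)) \<Longrightarrow> tens_of_coord b \<in> X i"
  unfolding tens_of_coord_def by (rule tsum_X) (auto intro: X_gen pi_power_mpow)

lemma X_iff_tcoord: "x \<in> X i \<longleftrightarrow> x \<in> tcarrier S \<and> (\<forall>l<n. tcoord x l \<in> mpow v (i - int l))"
proof
  assume "x \<in> tcarrier S \<and> (\<forall>l<n. tcoord x l \<in> mpow v (i - int l))"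
  with tens_of_coord_X[of "tcoord x" i] show "x \<in> X i" by (simp add: tens_of_coord_tcoord)
qed (simp add: X_in tcoord_X)

lemma X_neg: "x \<in> X i \<Longrightarrow> tneg S x \<in> X i"
  by (auto simp: X_iff_tcoord tcoord_tneg tneg_in intro: mpow_uminus)

lemma X_sub: "x \<in> X i \<Longrightarrow> y \<in> X i \<Longrightarrow> tsub S x y \<in> X i"
  by (simp add: tsub_def X_add X_neg)

lemma tp_mul_X:
  assumes a: "a \<in> mpow v j" and b: "b \<in> mpow v (i - j)" and y: "y \<in> X k"
  shows "tmul S (tp S a b) y \<in> X (i + k)"
  using y
proof (induction rule: X_induct)
  case (gen j' a' b')
  have "a * a' \<in> mpow v (j + j')" "b * b' \<in> mpow v ((i + k) - (j + j'))"
    using mpow_mult[OF a gen(1)] mpow_mult[OF b gen(2)] by (simp_all add: algebra_simps)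
  then show ?case by (simp add: tp_mul X_gen)
qed (simp_all add: tmul_zero tmul_add_right tmul_left_commute[of "tp S a b"] tp_in X_in
  X_zero X_add X_scalar)

lemma X_mul:
  assumes x: "x \<in> X i" and y: "y \<in> X j"
  shows "tmul S x y \<in> X (i + j)"
  using x
proof (induction rule: X_induct)
  case zero
  show ?case using X_in[OF y] by (simp add: tzero_mul X_zero)
next
  case (gen j a b)
  then show ?case using tp_mul_X[OF _ _ y] by blast
next
  case (add x x')
  then show ?case using X_in[OF y] by (simp add: tmul_add_left X_in X_add)
next
  case (scalar c x)
  then show ?case using tmul_assoc[OF tp_in X_in[OF scalar(3)] X_in[OF y]] by (simp add: X_scalar)
qed

lemma tone_X0: "tone S \<in> X 0"
  unfolding tone_def by (rule X_gen[of 1 0]) (simp_all add: mpow_def v_one)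

lemma otens_singleton:
  assumes "y \<in> otens S v {a} (mpow v k)"
  shows "\<exists>b\<in>mpow v k. y = tp S a b"
  using assms unfolding otens_def
proof induction
  case zero
  show ?case by (intro bexI[of _ 0]) (simp_all add: tp_zero_right)
next
  case (add x y)
  then obtain b b' where "b \<in> mpow v k" "x = tp S a b" "b' \<in> mpow v k" "y = tp S a b'" by blast
  then show ?case by (intro bexI[of _ "b + b'"]) (simp_all add: tp_add_right mpow_add)
next
  case (smult c x)
  then obtain b where b: "b \<in> mpow v k" "x = tp S a b" by blast
  have "tmul S (tp S c 1) x = tp S a (c * b)" using b smult by (simp add: tp_mul tp_scalar)
  moreover have "c * b \<in> mpow v (0 + k)"
    using smult b by (intro mpow_mult) (auto simp: vring_iff_mpow)
  ultimately show ?case by auto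
qed blast

lemma tp_in_otens: "b \<in> mpow v k \<Longrightarrow> tp S a b \<in> otens S v {a} (mpow v k)"
  unfolding otens_def by (rule ospan.gen) blast

lemma X_eq_tsum_otens:
  "X i = {tsum S y n | y. \<forall>l<n. y l \<in> otens S v {\<pi> ^ l} (mpow v (i - int l))}"
proof (intro set_eqI iffI)
  fix x assume x: "x \<in> X i"
  have "\<forall>l<n. tp S (\<pi> ^ l) (tcoord x l) \<in> otens S v {\<pi> ^ l} (mpow v (i - int l))"
    using tcoord_X[OF x] by (auto intro: tp_in_otens)
  with tens_of_coord_tcoord[OF X_in[OF x]]
  show "x \<in> {tsum S y n | y. \<forall>l<n. y l \<in> otens S v {\<pi> ^ l} (mpow v (i - int l))}"
    unfolding tens_of_coord_def by (intro CollectI exI[of _ "\<lambda>l. tp S (\<pi> ^ l) (tcoord x l)"]) simp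
next
  fix x assume "x \<in> {tsum S y n | y. \<forall>l<n. y l \<in> otens S v {\<pi> ^ l} (mpow v (i - int l))}"
  then obtain y where x: "x = tsum S y n"
    and y: "\<forall>l<n. y l \<in> otens S v {\<pi> ^ l} (mpow v (i - int l))" by blast
  have "y l \<in> X i" if "l < n" for l
    using otens_singleton[OF y[rule_format, OF that]] X_gen[OF pi_power_mpow] by auto
  then show "x \<in> X i" unfolding x by (rule tsum_X)
qed

lemma tsum_otens_eq_zero:
  assumes y: "\<forall>l<n. y l \<in> otens S v {\<pi> ^ l} (mpow v (i - int l))" and z: "tsum S y n = tzero S"
  shows "\<forall>l<n. y l = tzero S"
proof -
  have "\<forall>l\<in>{..<n}. \<exists>b. y l = tp S (\<pi> ^ l) b"
    using otens_singleton[OF y[rule_format]] by auto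
  from bchoice[OF this] obtain b where "\<forall>l\<in>{..<n}. y l = tp S (\<pi> ^ l) (b l)" ..
  then have b: "\<forall>l<n. y l = tp S (\<pi> ^ l) (b l)" by simp
  have "tsum S y n = tens_of_coord b"
    unfolding tens_of_coord_def by (rule tsum_cong) (simp add: b)
  then have "b l = 0" if "l < n" for l
    using tcoord_tens_of_coord[OF that, of b] z tcoord_tzero[OF that] by simp
  then show ?thesis using b by (simp add: tp_zero_right)
qed

end

section \<open>The residue ring \<open>X\<^sub>0/X\<^sub>1\<close>\<close>

lemma smult_sum: "smult a (sum f A) = (\<Sum>x\<in>A. smult a (f x))"
  by (induction A rule: infinite_finite_induct) (auto simp: smult_add_right)

lemma pcompose_monom: "pcompose (monom c k) q = smult c (q ^ k)"
  by (induction k) (auto simp: monom_0 monom_Suc pcompose_pCons)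

lemma nat_mod_add:
  assumes "0 < n"
  shows "nat ((x + y) mod int n) = (nat (x mod int n) + nat (y mod int n)) mod n"
proof -
  have "int ((nat (x mod int n) + nat (y mod int n)) mod n) = (x mod int n + y mod int n) mod int n"
    using assms by (simp add: zmod_int)
  also have "\<dots> = (x + y) mod int n" by (simp add: mod_add_eq)
  finally show ?thesis by (metis nat_int)
qed

lemma nat_mod_uminus:
  assumes "0 < n"
  shows "nat ((- x) mod int n) = ((n - 1) * nat (x mod int n)) mod n"
proof -
  have "int (((n - 1) * nat (x mod int n)) mod n) = ((int n - 1) * (x mod int n)) mod int n"
    using assms by (simp add: zmod_int of_nat_diff)
  also have "\<dots> = (- (x mod int n)) mod int n"
    by (simp add: algebra_simps mod_diff_left_eq[symmetric])
  also have "\<dots> = (- x) mod int n" by (simp add: mod_minus_eq)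
  finally show ?thesis by (metis nat_int)
qed

lemma degree_monom_minus_one: "0 < n \<Longrightarrow> degree (monom 1 n - 1 :: 'a::field poly) = n"
  by (rule antisym, rule degree_diff_le) (auto simp: degree_monom_le intro: le_degree)

lemma mod_monom_minus_one_small:
  "degree p < n \<Longrightarrow> p mod (monom 1 n - 1 :: 'a::field poly) = p"
  by (cases "n = 0") (auto simp: degree_monom_minus_one intro!: mod_poly_less)

lemma monom_mod_monom_minus_one:
  assumes n: "0 < n"
  shows "monom c m mod (monom 1 n - 1 :: 'a::field poly) = monom c (m mod n)"
proof -
  have "monom c m - monom c (m mod n) = monom c (m mod n) * ((monom 1 n) ^ (m div n) - 1)"
    by (subst (1) div_mult_mod_eq[of m n, symmetric])
      (simp add: monom_power mult_monom algebra_simps)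
  also have "(monom 1 n) ^ (m div n) - 1 = (monom 1 n - 1 :: 'a poly) * (\<Sum>i<m div n. (monom 1 n) ^ i)"
    by (rule power_diff_1_eq)
  finally have "(monom 1 n - 1 :: 'a poly) dvd monom c m - monom c (m mod n)" by simp
  then have "monom c m mod (monom 1 n - 1) = monom c (m mod n) mod (monom 1 n - 1 :: 'a poly)"
    by (simp add: mod_eq_dvd_iff)
  also have "\<dots> = monom c (m mod n)"
    using degree_monom_le[of c "m mod n"] mod_less_divisor[OF n, of m]
    by (intro mod_monom_minus_one_small) linarith
  finally show ?thesis .
qed

lemma coeff_sum_monom: "coeff (\<Sum>l<n. monom (c l) l) k = (if k < n then c k else 0)"
  by (simp add: coeff_sum)

lemma degree_sum_monom: "0 < n \<Longrightarrow> degree (\<Sum>l<n. monom (c l) l) < n"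
  using degree_le[of "n - 1" "\<Sum>l<n. monom (c l) l"] by (fastforce simp: coeff_sum_monom)

lemma sum_monom_eq_0_iff: "(\<Sum>l<n. monom (c l) l) = 0 \<longleftrightarrow> (\<forall>l<n. c l = 0)"
  by (auto simp: poly_eq_iff coeff_sum_monom)

lemma sum_monom_single: "k < n \<Longrightarrow> (\<Sum>l<n. monom (if l = k then a else 0) l) = monom a k"
  by (simp add: if_distrib[of "\<lambda>c. monom c _"] cong: if_cong)

lemma sum_monom_coeff: "degree p < n \<Longrightarrow> (\<Sum>l<n. monom (coeff p l) l) = p"
  by (auto simp: poly_eq_iff coeff_sum_monom coeff_eq_0)

locale totally_ramified_residue = totally_ramified S v n \<pi>
  for S :: "'a::field set" and v n \<pi> +
  fixes res :: "'a \<Rightarrow> 'k::field"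
  assumes residue_map: "residue_map v res"
begin

lemma res_add: "x \<in> vring v \<Longrightarrow> y \<in> vring v \<Longrightarrow> res (x + y) = res x + res y"
  and res_mult: "x \<in> vring v \<Longrightarrow> y \<in> vring v \<Longrightarrow> res (x * y) = res x * res y"
  and res_one: "res 1 = 1"
  and res_eq_0_iff: "x \<in> vring v \<Longrightarrow> res x = 0 \<longleftrightarrow> x \<in> mpow v 1"
  and res_surj: "res ` vring v = UNIV"
  using residue_map by (simp_all add: residue_map_def)

lemma res_zero: "res 0 = 0"
  using res_eq_0_iff[of 0] by (simp add: vring_iff_mpow)

lemma res_diff: "x \<in> vring v \<Longrightarrow> y \<in> vring v \<Longrightarrow> res (x - y) = res x - res y"
  using res_add[of "x - y" y] mpow_diff[of x 0 y] by (simp add: vring_iff_mpow)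

lemma res_uminus: "x \<in> vring v \<Longrightarrow> res (- x) = - res x"
  using res_diff[of 0 x] by (simp add: res_zero vring_iff_mpow)

lemma res_eq_if_diff_mpow1: "x \<in> vring v \<Longrightarrow> y \<in> vring v \<Longrightarrow> x - y \<in> mpow v 1 \<Longrightarrow> res x = res y"
  using res_diff[of x y] res_eq_0_iff[of "x - y"] mpow_diff[of x 0 y] by (simp add: vring_iff_mpow)

text \<open>Totally ramified: \<open>k'\<close> and \<open>K'\<close> have the same residue field.\<close>

lemma res_lift_subfield:
  assumes u: "u \<in> vring v"
  shows "\<exists>s\<in>S. s \<in> vring v \<and> res s = res u"
proof (cases "u \<in> mpow v 1")
  case True
  then show ?thesis
    using u res_zero res_eq_0_iff[OF u] subfield_zero[OF subfield]
    by (intro bexI[of _ 0]) (auto simp: vring_iff_mpow)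
next
  case False
  then have u0: "u \<noteq> 0" and vu: "v u = 0" using u by (auto simp: vring_iff_mpow mpow_def)
  then have l0: "nat (v u mod int n) = 0" by simp
  have s: "coord u 0 \<in> S" using coord_in_subfield n_pos by simp
  have "coord u 0 \<noteq> 0" "v (coord u 0) = 0"
    using coord_terms_valuation(2,3)[OF u0] l0 vu by simp_all
  then have sv: "coord u 0 \<in> vring v" by (simp add: vring_iff_mpow mpow_def)
  have "u - coord u 0 \<in> mpow v 1" using coord_leading_term[OF u0] l0 vu by simp
  then show ?thesis using s sv res_eq_if_diff_mpow1[OF u sv] by auto
qed

abbreviation xn_minus_1 :: "'k poly" where
  "xn_minus_1 \<equiv> monom 1 n - 1"

text \<open>For \<open>\<alpha> \<in> X\<^sub>0\<close> the \<open>l\<close>-th coordinate lies in \<open>m'\<^sup>-\<^sup>l\<close>, so \<open>\<pi>\<^sup>l\<close> times it is integral.\<close>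

definition rX :: "'a tens \<Rightarrow> 'k poly" where
  "rX x = (\<Sum>l<n. monom (res (\<pi> ^ l * tcoord x l)) l)"

lemma degree_rX: "degree (rX x) < n"
  unfolding rX_def using n_pos by (rule degree_sum_monom)

lemma pi_power_tcoord_vring: "x \<in> X 0 \<Longrightarrow> l < n \<Longrightarrow> \<pi> ^ l * tcoord x l \<in> vring v"
  using mpow_mult[OF pi_power_mpow[of l] tcoord_X[of x 0 l]] by (simp add: vring_iff_mpow)

lemma rX_add: "x \<in> X 0 \<Longrightarrow> y \<in> X 0 \<Longrightarrow> rX (tadd S x y) = rX x + rX y"
  unfolding rX_def
  by (auto simp: tcoord_tadd X_in distrib_left res_add pi_power_tcoord_vring add_monom
      sum.distrib[symmetric] intro!: sum.cong)

lemma rX_tneg: "x \<in> X 0 \<Longrightarrow> rX (tneg S x) = - rX x"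
  unfolding rX_def
  by (auto simp: tcoord_tneg X_in res_uminus pi_power_tcoord_vring minus_monom sum_negf[symmetric]
      intro!: sum.cong)

lemma rX_tsub: "x \<in> X 0 \<Longrightarrow> y \<in> X 0 \<Longrightarrow> rX (tsub S x y) = rX x - rX y"
  by (simp add: tsub_def rX_add rX_tneg X_neg)

lemma rX_tzero: "rX (tzero S) = 0"
  by (simp add: rX_def tcoord_tzero res_zero)

lemma rX_scalar:
  "c \<in> S \<Longrightarrow> c \<in> vring v \<Longrightarrow> x \<in> X 0 \<Longrightarrow> rX (tmul S (tp S c 1) x) = smult (res c) (rX x)"
  unfolding rX_def
  by (auto simp: tcoord_scalar X_in smult_sum smult_monom res_mult[symmetric] pi_power_tcoord_vring
      mult.left_commute intro!: sum.cong)

lemma rX_eq_0_iff: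
  assumes x: "x \<in> X 0"
  shows "rX x = 0 \<longleftrightarrow> x \<in> X 1"
proof -
  have "rX x = 0 \<longleftrightarrow> (\<forall>l<n. \<pi> ^ l * tcoord x l \<in> mpow v 1)"
    unfolding rX_def sum_monom_eq_0_iff using res_eq_0_iff pi_power_tcoord_vring[OF x] by auto
  also have "\<dots> \<longleftrightarrow> (\<forall>l<n. tcoord x l \<in> mpow v (1 - int l))"
    by (simp add: pi_power_mult_mpow_iff)
  also have "\<dots> \<longleftrightarrow> x \<in> X 1" using X_in[OF x] by (simp add: X_iff_tcoord)
  finally show ?thesis .
qed

lemma diff_X1_if_rX_eq: "x \<in> X 0 \<Longrightarrow> y \<in> X 0 \<Longrightarrow> rX x = rX y \<Longrightarrow> tsub S x y \<in> X 1"
  using rX_eq_0_iff[of "tsub S x y"] by (simp add: rX_tsub X_sub)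

text \<open>Modulo \<open>m'\<close> only the term of \<open>a\<close> that carries its valuation survives.\<close>

lemma rX_tp:
  assumes a: "a \<in> mpow v j" and b: "b \<in> mpow v (- j)"
  shows "rX (tp S a b) = monom (res (a * b)) (nat (v a mod int n))"
proof (cases "a = 0 \<or> b = 0")
  case True
  then show ?thesis by (auto simp: rX_def tcoord_tp coord_zero res_zero)
next
  case False
  then have a0: "a \<noteq> 0" and b0: "b \<noteq> 0" by auto
  have vab: "0 \<le> v a + v b" using a b a0 b0 by (auto simp: mpow_def)
  let ?l0 = "nat (v a mod int n)"
  have ab: "a * b \<in> vring v" using mpow_mult[OF a b] by (simp add: vring_iff_mpow)
  have deep: "y * b \<in> mpow v 1" if "y \<in> mpow v (v a + 1)" for y
    by (rule mpow_mono[OF _ mpow_mult[OF that mpow_v[of b]]]) (use vab in simp)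
  have "res (\<pi> ^ l * (coord a l * b)) = (if l = ?l0 then res (a * b) else 0)" if l: "l < n" for l
  proof (cases "l = ?l0")
    case True
    have d: "a * b - coord a l * \<pi> ^ l * b \<in> mpow v 1"
      using deep[OF coord_leading_term[OF a0]] True by (simp add: algebra_simps)
    have "a * b - (a * b - coord a l * \<pi> ^ l * b) \<in> mpow v 0"
      by (rule mpow_diff) (use ab mpow_one_vring[OF d] in \<open>simp_all add: vring_iff_mpow\<close>)
    then have "coord a l * \<pi> ^ l * b \<in> vring v" by (simp add: vring_iff_mpow)
    with res_eq_if_diff_mpow1[OF ab _ d] show ?thesis using True by (simp add: ac_simps)
  next
    case False
    have "coord a l * \<pi> ^ l * b \<in> mpow v 1"
      using deep[OF coord_terms_valuation(5)[OF a0 l False]] .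
    then show ?thesis using res_eq_0_iff[OF mpow_one_vring] False by (simp add: ac_simps)
  qed
  then have "rX (tp S a b) = (\<Sum>l<n. monom (if l = ?l0 then res (a * b) else 0) l)"
    unfolding rX_def by (auto simp: tcoord_tp intro!: sum.cong)
  also have "\<dots> = monom (res (a * b)) ?l0"
    using coord_terms_valuation(1)[OF a0] by (rule sum_monom_single)
  finally show ?thesis .
qed

lemma rX_tone: "rX (tone S) = 1"
  using rX_tp[of 1 0 1] by (simp add: tone_def mpow_def v_one res_one monom_0 one_pCons)

lemma rX_tp_mul:
  assumes a: "a \<in> mpow v j" and b: "b \<in> mpow v (- j)"
    and a': "a' \<in> mpow v j'" and b': "b' \<in> mpow v (- j')"
  shows "rX (tp S (a * a') (b * b')) = (rX (tp S a b) * rX (tp S a' b')) mod xn_minus_1"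
proof -
  have aa': "a * a' \<in> mpow v (j + j')" and bb': "b * b' \<in> mpow v (- (j + j'))"
    using mpow_mult[OF a a'] mpow_mult[OF b b'] by simp_all
  have "res (a * a' * (b * b')) = res (a * b) * res (a' * b')"
    using res_mult[of "a * b" "a' * b'"] mpow_mult[OF a b] mpow_mult[OF a' b']
    by (simp add: vring_iff_mpow ac_simps)
  moreover have "a \<noteq> 0 \<Longrightarrow> a' \<noteq> 0 \<Longrightarrow>
      nat (v (a * a') mod int n) = (nat (v a mod int n) + nat (v a' mod int n)) mod n"
    using nat_mod_add[OF n_pos] by (simp add: v_mult)
  ultimately show ?thesis
    unfolding rX_tp[OF aa' bb'] rX_tp[OF a b] rX_tp[OF a' b']
    by (cases "a = 0 \<or> a' = 0")
      (auto simp: res_zero mult_monom monom_mod_monom_minus_one[OF n_pos])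
qed

lemma X0_mul: "x \<in> X 0 \<Longrightarrow> y \<in> X 0 \<Longrightarrow> tmul S x y \<in> X 0"
  using X_mul[of x 0 y 0] by simp

lemma rX_tp_mul_left:
  assumes a: "a \<in> mpow v j" and b: "b \<in> mpow v (- j)" and y: "y \<in> X 0"
  shows "rX (tmul S (tp S a b) y) = (rX (tp S a b) * rX y) mod xn_minus_1"
proof -
  have ab: "tp S a b \<in> X 0" using X0_gen[OF a b] .
  show ?thesis
    using y
  proof (induction rule: X_induct)
    case zero
    then show ?case by (simp add: tmul_zero tp_in rX_tzero)
  next
    case (gen j' a' b')
    then show ?case using rX_tp_mul[OF a b] by (simp add: tp_mul)
  next
    case (add x y)
    then show ?case
      by (simp add: tmul_add_right tp_in X_in rX_add X0_mul[OF ab] distrib_left poly_mod_add_left)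
  next
    case (scalar c x)
    then show ?case
      by (simp add: tmul_left_commute[of "tp S a b"] tp_in X_in rX_scalar X0_mul[OF ab]
          mod_smult_left)
  qed
qed

lemma rX_mul:
  assumes x: "x \<in> X 0" and y: "y \<in> X 0"
  shows "rX (tmul S x y) = (rX x * rX y) mod xn_minus_1"
  using x
proof (induction rule: X_induct)
  case zero
  then show ?case using X_in[OF y] by (simp add: tzero_mul rX_tzero)
next
  case (gen j a b)
  then show ?case using rX_tp_mul_left[OF _ _ y] by simp
next
  case (add x x')
  then show ?case using X_in[OF y]
    by (simp add: tmul_add_left X_in rX_add X0_mul[OF _ y] distrib_right poly_mod_add_left)
next
  case (scalar c x)
  then show ?case using tmul_assoc[OF tp_in X_in[OF scalar(3)] X_in[OF y]]
    by (simp add: rX_scalar X0_mul[OF _ y] mod_smult_left)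
qed

end

context totally_ramified_residue
begin

lemma tswap_X: "x \<in> X i \<Longrightarrow> tswap S x \<in> X i"
proof (induction rule: X_induct)
  case (gen j a b)
  then show ?case using X_gen[of b "i - j" a i] by (simp add: tswap_tp)
next
  case (add x y)
  then show ?case by (simp add: tswap_add X_in[OF add(1)] X_in[OF add(2)] X_add)
next
  case (scalar c x)
  then show ?case
    by (simp add: tswap_mul tp_in X_in[OF scalar(3)] tswap_tp tp_scalar_swap X_scalar)
qed (simp add: tswap_zero X_zero)

lemma tswap_image_X: "tswap S ` X i = X i"
proof
  show "X i \<subseteq> tswap S ` X i"
    using tswap_X tswap_tswap[OF X_in] by (intro subsetI) (metis imageI)
qed (use tswap_X in blast)

lemma rX_tswap: "x \<in> X 0 \<Longrightarrow> rX (tswap S x) = pcompose (rX x) (monom 1 (n - 1)) mod xn_minus_1"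
proof (induction rule: X_induct)
  case (gen j a b)
  then have ab: "a \<in> mpow v j" "b \<in> mpow v (- j)" by simp_all
  have l: "rX (tswap S (tp S a b)) = monom (res (a * b)) (nat (v b mod int n))"
    using rX_tp[of b "- j" a] ab by (simp add: tswap_tp mult.commute)
  have r: "pcompose (rX (tp S a b)) (monom 1 (n - 1)) mod xn_minus_1
      = monom (res (a * b)) (((n - 1) * nat (v a mod int n)) mod n)"
    using rX_tp[OF ab] by (simp add: pcompose_monom monom_power smult_monom
        monom_mod_monom_minus_one[OF n_pos] mult.commute)
  show ?case
  proof (cases "res (a * b) = 0")
    case False
    have ab': "a * b \<in> vring v" using mpow_mult[OF ab] by (simp add: vring_iff_mpow)
    with False have "a * b \<notin> mpow v 1" "a \<noteq> 0" "b \<noteq> 0" using res_eq_0_iff by auto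
    with ab' have "v b = - v a" by (auto simp: vring_iff_mpow mpow_def v_mult)
    then show ?thesis using l r nat_mod_uminus[OF n_pos, of "v a"] by simp
  qed (use l r in simp)
next
  case (add x y)
  then show ?case
    by (simp add: tswap_add X_in[OF add(1)] X_in[OF add(2)] rX_add tswap_X pcompose_add
        poly_mod_add_left)
next
  case (scalar c x)
  then show ?case
    by (simp add: tswap_mul tp_in X_in[OF scalar(3)] tswap_tp tp_scalar_swap rX_scalar tswap_X
        pcompose_smult mod_smult_left)
qed (simp add: tswap_zero rX_tzero)

abbreviation tpi :: "'a tens" where
  "tpi \<equiv> tp S \<pi> (inverse \<pi>)"

lemma tpow_tp: "tpow S (tp S a b) k = tp S (a ^ k) (b ^ k)"
  by (induction k) (auto simp: tone_def tp_mul mult.commute)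

lemma tinv_tp_inverse:
  assumes a: "a \<noteq> 0"
  shows "tinv S (tp S a (inverse a)) = tp S (inverse a) a"
  unfolding tinv_def
proof (rule some_equality)
  show "tp S (inverse a) a \<in> tcarrier S \<and> tmul S (tp S a (inverse a)) (tp S (inverse a) a) = tone S"
    using a by (simp add: tp_in tp_mul tone_def)
  fix y assume y: "y \<in> tcarrier S \<and> tmul S (tp S a (inverse a)) y = tone S"
  have "tmul S (tp S (inverse a) a) (tp S a (inverse a)) = tone S"
    using a by (simp add: tp_mul tone_def)
  then have "y = tmul S (tmul S (tp S (inverse a) a) (tp S a (inverse a))) y"
    using y by (simp add: tone_mul)
  also have "\<dots> = tp S (inverse a) a"
    using y by (simp add: tmul_assoc tp_in tmul_one)
  finally show "y = tp S (inverse a) a" .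
qed

lemma tpowi_tpi: "\<exists>a. a \<noteq> 0 \<and> v a = k \<and> tpowi S tpi k = tp S a (inverse a)"
proof (cases "0 \<le> k")
  case True
  then show ?thesis
    using v_pi_power[of "nat k"] pi_power_nonzero[of "nat k"]
    by (intro exI[of _ "\<pi> ^ nat k"]) (simp add: tpowi_def tpow_tp power_inverse)
next
  case False
  then show ?thesis
    using v_inverse[OF pi_power_nonzero] v_pi_power[of "nat (- k)"] pi_power_nonzero[of "nat (- k)"]
    by (intro exI[of _ "inverse (\<pi> ^ nat (- k))"])
      (simp add: tpowi_def tinv_tp_inverse[OF pi_nonzero] tpow_tp power_inverse)
qed

lemma tp_inverse_X0: "a \<noteq> 0 \<Longrightarrow> tp S a (inverse a) \<in> X 0"
  by (rule X0_gen[of a "v a"]) (simp_all add: mpow_v mpow_inverse)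

lemma rX_tp_inverse: "a \<noteq> 0 \<Longrightarrow> rX (tp S a (inverse a)) = monom 1 (nat (v a mod int n))"
  using rX_tp[OF mpow_v[of a], of "inverse a"] by (simp add: mpow_inverse res_one)

lemma tp_subfield_X0: "c \<in> S \<Longrightarrow> c \<in> vring v \<Longrightarrow> tp S c 1 \<in> X 0"
  using X_gen[of c 0 1 0] by (simp add: vring_iff_mpow mpow_def v_one)

lemma rX_tp_subfield: "c \<in> S \<Longrightarrow> c \<in> vring v \<Longrightarrow> rX (tp S c 1) = [:res c:]"
  using rX_tp[of c 0 1] dvd_v_subfield[of c]
  by (cases "c = 0") (auto simp: vring_iff_mpow mpow_def v_one res_zero monom_0)

lemma rX_surj: "degree p < n \<Longrightarrow> \<exists>\<alpha>\<in>X 0. rX \<alpha> = p"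
proof -
  assume p: "degree p < n"
  have "\<forall>l\<in>{..<n}. \<exists>u. u \<in> vring v \<and> res u = coeff p l" using res_surj by (metis imageE UNIV_I)
  from bchoice[OF this] obtain u where u: "\<forall>l\<in>{..<n}. u l \<in> vring v \<and> res (u l) = coeff p l" ..
  define b where "b l = inverse (\<pi> ^ l) * u l" for l
  have pb: "\<pi> ^ l * b l = u l" for l
    using pi_power_nonzero[of l] by (simp add: b_def mult.assoc[symmetric])
  have "b l \<in> mpow v (0 - int l)" if "l < n" for l
    using u that pi_power_mult_mpow_iff[of l "b l" 0] by (simp add: pb vring_iff_mpow)
  then have "tens_of_coord b \<in> X 0" by (rule tens_of_coord_X)
  moreover have "rX (tens_of_coord b) = (\<Sum>l<n. monom (coeff p l) l)"
    unfolding rX_def using u by (intro sum.cong) (simp_all add: tcoord_tens_of_coord pb)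
  ultimately show ?thesis using sum_monom_coeff[OF p] by auto
qed

lemma is_rX_rX:
  assumes "\<pi>' \<noteq> 0" "v \<pi>' = 1"
  shows "is_rX S v res n \<pi>' rX"
proof -
  have small: "p mod xn_minus_1 = p" if "degree p = 0" for p
    using n_pos that by (simp add: mod_monom_minus_one_small)
  have "[:0, 1:] = (monom 1 1 :: 'k poly)" by (simp add: monom_Suc monom_0 one_pCons)
  moreover have "nat (1 mod int n) = 1 mod n" by (metis nat_int of_nat_1 zmod_int)
  ultimately have "rX (tp S \<pi>' (inverse \<pi>')) = [:0, 1:] mod xn_minus_1"
    using rX_tp_inverse[OF assms(1)] assms(2) by (simp add: monom_mod_monom_minus_one[OF n_pos])
  then show ?thesis
    unfolding is_rX_def Let_def
    using degree_rX rX_add rX_mul rX_tone rX_tp_subfield rX_eq_0_iff rX_surj by (simp add: small)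
qed

lemma X0_generator_mod_X1:
  assumes a: "a \<in> mpow v j" and b: "b \<in> mpow v (- j)"
  obtains s where "s \<in> S" "s \<in> vring v" "res s = res (a * b)"
    "tsub S (tp S a b) (tmul S (tp S s 1) (tpow S tpi (nat (v a mod int n)))) \<in> X 1"
proof -
  let ?k = "nat (v a mod int n)"
  have ab: "a * b \<in> vring v" using mpow_mult[OF a b] by (simp add: vring_iff_mpow)
  obtain s where s: "s \<in> S" "s \<in> vring v" "res s = res (a * b)"
    using res_lift_subfield[OF ab] by blast
  have \<gamma>: "tmul S (tp S s 1) (tpow S tpi ?k) = tp S (s * \<pi> ^ ?k) (inverse (\<pi> ^ ?k))"
    by (simp add: tpow_tp tp_mul power_inverse)
  have sk: "s * \<pi> ^ ?k \<in> mpow v (int ?k)" "inverse (\<pi> ^ ?k) \<in> mpow v (- int ?k)"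
    using mpow_mult[OF s(2)[unfolded vring_iff_mpow] pi_power_mpow[of ?k]]
      mpow_inverse[OF pi_power_nonzero, of ?k] by (simp_all add: v_pi_power)
  have "nat (v (s * \<pi> ^ ?k) mod int n) = ?k" if "s \<noteq> 0"
    using v_pi_term_mod[OF s(1) that, of ?k] n_pos by (simp add: nat_less_iff)
  then have "rX (tmul S (tp S s 1) (tpow S tpi ?k)) = monom (res s) ?k"
    unfolding \<gamma> rX_tp[OF sk] using pi_power_nonzero[of ?k]
    by (cases "s = 0") (simp_all add: res_zero mult.assoc)
  moreover have "tmul S (tp S s 1) (tpow S tpi ?k) \<in> X 0"
    unfolding \<gamma> by (rule X0_gen[OF sk])
  ultimately show ?thesis
    using that[OF s] diff_X1_if_rX_eq[OF X0_gen[OF a b]] rX_tp[OF a b] s(3) b by simp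
qed

context
  fixes r :: "'a tens \<Rightarrow> 'k poly"
  assumes r: "is_rX S v res n \<pi> r"
begin

lemma is_rX_add: "x \<in> X 0 \<Longrightarrow> y \<in> X 0 \<Longrightarrow> r (tadd S x y) = r x + r y"
  and is_rX_mul: "x \<in> X 0 \<Longrightarrow> y \<in> X 0 \<Longrightarrow> r (tmul S x y) = (r x * r y) mod xn_minus_1"
  and is_rX_degree: "x \<in> X 0 \<Longrightarrow> degree (r x) < n"
  and is_rX_eq_0_iff: "x \<in> X 0 \<Longrightarrow> r x = 0 \<longleftrightarrow> x \<in> X 1"
  using r by (auto simp: is_rX_def Let_def)

lemma is_rX_tone: "r (tone S) = 1"
  and is_rX_tp_subfield: "c \<in> S \<Longrightarrow> c \<in> vring v \<Longrightarrow> r (tp S c 1) = [:res c:]"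
  and is_rX_tpi: "r tpi = monom 1 (1 mod n)"
proof -
  have small: "p mod xn_minus_1 = p" if "degree p = 0" for p
    using n_pos that by (simp add: mod_monom_minus_one_small)
  have "[:0, 1:] = (monom 1 1 :: 'k poly)" by (simp add: monom_Suc monom_0 one_pCons)
  then show "r (tone S) = 1" "c \<in> S \<Longrightarrow> c \<in> vring v \<Longrightarrow> r (tp S c 1) = [:res c:]"
    "r tpi = monom 1 (1 mod n)"
    using r by (simp_all add: is_rX_def Let_def small monom_mod_monom_minus_one[OF n_pos])
qed

lemma is_rX_eq_if_diff_X1:
  assumes "x \<in> X 0" "y \<in> X 0" "tsub S x y \<in> X 1"
  shows "r x = r y"
  using is_rX_add[OF X_sub[OF assms(1,2)] assms(2)] is_rX_eq_0_iff[OF X_sub[OF assms(1,2)]]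
    assms tsub_add_cancel[OF X_in X_in] by simp

lemma is_rX_scalar:
  assumes "c \<in> S" "c \<in> vring v" "y \<in> X 0"
  shows "r (tmul S (tp S c 1) y) = smult (res c) (r y)"
  using is_rX_mul[OF tp_subfield_X0[OF assms(1,2)] assms(3)] is_rX_tp_subfield[OF assms(1,2)]
    mod_monom_minus_one_small[OF is_rX_degree[OF assms(3)]] by (simp add: mod_smult_left)

lemma tpow_tpi_X0: "tpow S tpi k \<in> X 0"
  using tp_inverse_X0[OF pi_power_nonzero[of k]] by (simp add: tpow_tp power_inverse)

lemma is_rX_tpow_tpi: "r (tpow S tpi k) = monom 1 (k mod n)"
proof (induction k)
  case (Suc k)
  have "r (tpow S tpi (Suc k)) = (monom 1 (k mod n) * monom 1 (1 mod n)) mod xn_minus_1"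
    using is_rX_mul[OF tpow_tpi_X0 tp_inverse_X0[OF pi_nonzero]] Suc by (simp add: is_rX_tpi)
  then show ?case by (simp only: mult_monom monom_mod_monom_minus_one[OF n_pos] mod_add_eq) simp
qed (simp add: is_rX_tone monom_0 one_pCons)

lemma is_rX_unique: "x \<in> X 0 \<Longrightarrow> r x = rX x"
proof (induction rule: X_induct)
  case (gen j a b)
  then have ab: "a \<in> mpow v j" "b \<in> mpow v (- j)" by simp_all
  let ?k = "nat (v a mod int n)"
  obtain s where s: "s \<in> S" "s \<in> vring v" "res s = res (a * b)"
    and d: "tsub S (tp S a b) (tmul S (tp S s 1) (tpow S tpi ?k)) \<in> X 1"
    using X0_generator_mod_X1[OF ab] .
  have "r (tp S a b) = r (tmul S (tp S s 1) (tpow S tpi ?k))"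
    using X0_gen[OF ab] X_scalar[OF s(1,2) tpow_tpi_X0]
    by (intro is_rX_eq_if_diff_X1 d) simp_all
  also have "\<dots> = monom (res s) ?k"
    using n_pos by (simp add: is_rX_scalar[OF s(1,2) tpow_tpi_X0] is_rX_tpow_tpi smult_monom
        nat_less_iff)
  finally show ?case using rX_tp[OF ab] s(3) by simp
next
  case zero
  have "r (tzero S) = r (tzero S) + r (tzero S)"
    using is_rX_add[OF X_zero X_zero] by (simp add: tadd_zero tzero_in)
  then show ?case by (simp only: add_cancel_right_right rX_tzero)
next
  case (add x y)
  then show ?case by (simp add: is_rX_add rX_add)
next
  case (scalar c x)
  then show ?case by (simp add: is_rX_scalar rX_scalar)
qed

end

end

context totally_ramified
begin

text \<open>Multiplication by \<open>a \<otimes> 1\<close> with \<open>v(a) = i\<close> is invertible and shifts the filtration by \<open>i\<close>.\<close>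

lemma X_graded_piece_free:
  "\<exists>e\<in>X i. (\<forall>x\<in>X i. \<exists>a\<in>X 0. tsub S x (tmul S a e) \<in> X (i + 1))
    \<and> (\<forall>a\<in>X 0. tmul S a e \<in> X (i + 1) \<longrightarrow> a \<in> X 1)"
proof -
  obtain a where a: "a \<noteq> 0" "v a = i" using v_surj by blast
  let ?e = "tp S a 1" and ?e' = "tp S (inverse a) 1"
  have e: "?e \<in> X i" using X_gen[of a i 1 i] a by (simp add: mpow_def v_one)
  have e': "?e' \<in> X (- i)" using X_gen[of "inverse a" "- i" 1 "- i"] a
    by (simp add: mpow_def v_one v_inverse)
  have cancel: "tmul S (tmul S x ?e) ?e' = x" "tmul S (tmul S x ?e') ?e = x"
    if "x \<in> tcarrier S" for x
    using that a by (simp_all add: tmul_assoc tp_in tp_mul tmul_one flip: tone_def)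
  have "\<exists>b\<in>X 0. tsub S x (tmul S b ?e) \<in> X (i + 1)" if x: "x \<in> X i" for x
    using X_mul[OF x e'] cancel(2)[OF X_in[OF x]] tsub_self[OF X_in[OF x]]
    by (intro bexI[of _ "tmul S x ?e'"]) (simp_all add: X_zero)
  moreover have "b \<in> X 1" if "b \<in> X 0" "tmul S b ?e \<in> X (i + 1)" for b
    using X_mul[OF that(2) e'] cancel(1)[OF X_in[OF that(1)]] by simp
  ultimately show ?thesis using e by blast
qed

end

context totally_ramified_residue
begin

lemma tp_inverse_minus_one_X1:
  assumes "x \<noteq> 0" "int n dvd v x"
  shows "tsub S (tp S x (inverse x)) (tone S) \<in> X 1"
proof -
  have "rX (tp S x (inverse x)) = rX (tone S)"
    using assms by (simp add: rX_tp_inverse, simp add: rX_tone)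
  then show ?thesis by (rule diff_X1_if_rX_eq[OF tp_inverse_X0[OF assms(1)] tone_X0])
qed

lemma tp_twisted_mod_X1:
  assumes x: "x \<noteq> 0" and u: "\<epsilon>1 \<in> vunits v" "\<epsilon>2 \<in> vunits v"
  shows "tsub S (tp S (\<epsilon>1 * x) (\<epsilon>2 * inverse x))
    (tmul S (tp S (\<epsilon>1 * \<epsilon>2) 1) (tpowi S tpi (v x))) \<in> X 1"
proof -
  have e: "\<epsilon>1 \<noteq> 0" "v \<epsilon>1 = 0" "\<epsilon>2 \<noteq> 0" "v \<epsilon>2 = 0" using u by (auto simp: vunits_def)
  obtain a where a: "a \<noteq> 0" "v a = v x" "tpowi S tpi (v x) = tp S a (inverse a)"
    using tpowi_tpi by blast
  have m: "\<epsilon>1 * x \<in> mpow v (v x)" "\<epsilon>2 * inverse x \<in> mpow v (- v x)"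
    "\<epsilon>1 * \<epsilon>2 * a \<in> mpow v (v x)" "inverse a \<in> mpow v (- v x)"
    using e a x by (auto simp: mpow_def v_mult v_inverse)
  have eq: "\<epsilon>1 * x * (\<epsilon>2 * inverse x) = \<epsilon>1 * \<epsilon>2 * a * inverse a"
    "v (\<epsilon>1 * x) = v (\<epsilon>1 * \<epsilon>2 * a)"
    using e a x by (simp_all add: v_mult)
  have "rX (tp S (\<epsilon>1 * x) (\<epsilon>2 * inverse x)) = rX (tp S (\<epsilon>1 * \<epsilon>2 * a) (inverse a))"
    unfolding rX_tp[OF m(1,2)] rX_tp[OF m(3,4)] eq ..
  from diff_X1_if_rX_eq[OF X0_gen[OF m(1,2)] X0_gen[OF m(3,4)] this] show ?thesis
    using a(3) by (simp add: tp_mul)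
qed

lemma tp_uniformizer_mod_X1:
  assumes "\<pi>1 \<noteq> 0" "v \<pi>1 = 1" "\<pi>2 \<noteq> 0" "v \<pi>2 = 1"
  shows "tsub S (tp S \<pi>1 (inverse \<pi>1)) (tp S \<pi>2 (inverse \<pi>2)) \<in> X 1"
  using assms by (intro diff_X1_if_rX_eq tp_inverse_X0) (simp_all add: rX_tp_inverse)

end

theorem proposition2p2p1:
  fixes S :: "'a::field set" and v :: "'a \<Rightarrow> int" and n :: nat and \<pi> :: 'a
    and res :: "'a \<Rightarrow> 'k::field" and i j :: int
  assumes ext: "totally_ramified_cdvf S v n"
    and unif: "\<pi> \<noteq> 0" "v \<pi> = 1"
    and res: "residue_map v res"
  shows
    \<comment> \<open>1.\<close>
    "(\<forall>x\<in>Xfil S v i. \<forall>y\<in>Xfil S v j. tmul S x y \<in> Xfil S v (i + j))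
     \<and> (tone S \<in> Xfil S v 0 \<and> tzero S \<in> Xfil S v 0
        \<and> (\<forall>x\<in>Xfil S v 0. \<forall>y\<in>Xfil S v 0. tadd S x y \<in> Xfil S v 0 \<and> tmul S x y \<in> Xfil S v 0)
        \<and> (\<forall>x\<in>Xfil S v 0. tneg S x \<in> Xfil S v 0))
     \<and> (\<forall>a\<in>Xfil S v 0. \<forall>x\<in>Xfil S v i. tmul S a x \<in> Xfil S v i)
     \<and> (\<forall>x\<in>Xfil S v i. \<forall>y\<in>Xfil S v i. tadd S x y \<in> Xfil S v i)
    \<comment> \<open>2.\<close>
     \<and> (\<exists>e\<in>Xfil S v i.
          (\<forall>x\<in>Xfil S v i. \<exists>a\<in>Xfil S v 0. tsub S x (tmul S a e) \<in> Xfil S v (i + 1))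
        \<and> (\<forall>a\<in>Xfil S v 0. tmul S a e \<in> Xfil S v (i + 1) \<longrightarrow> a \<in> Xfil S v 1))
    \<comment> \<open>3.\<close>
     \<and> Xfil S v i = {tsum S y n | y. \<forall>l<n. y l \<in> otens S v {\<pi> ^ l} (mpow v (i - int l))}
     \<and> (\<forall>y. (\<forall>l<n. y l \<in> otens S v {\<pi> ^ l} (mpow v (i - int l))) \<longrightarrow> tsum S y n = tzero S
            \<longrightarrow> (\<forall>l<n. y l = tzero S))
    \<comment> \<open>4.\<close>
     \<and> (\<forall>\<epsilon>\<in>vunits v. tsub S (tp S \<epsilon> (inverse \<epsilon>)) (tone S) \<in> Xfil S v 1)
     \<and> (\<forall>x. x \<noteq> 0 \<longrightarrow> (\<forall>\<epsilon>1\<in>vunits v. \<forall>\<epsilon>2\<in>vunits v.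
           tsub S (tp S (\<epsilon>1 * x) (\<epsilon>2 * inverse x))
                  (tmul S (tp S (\<epsilon>1 * \<epsilon>2) 1) (tpowi S (tp S \<pi> (inverse \<pi>)) (v x)))
             \<in> Xfil S v 1))
     \<and> (\<forall>x. x \<noteq> 0 \<longrightarrow> int n dvd v x \<longrightarrow> tsub S (tp S x (inverse x)) (tone S) \<in> Xfil S v 1)
    \<comment> \<open>5. and 6.\<close>
     \<and> (\<forall>\<pi>1 \<pi>2. \<pi>1 \<noteq> 0 \<longrightarrow> v \<pi>1 = 1 \<longrightarrow> \<pi>2 \<noteq> 0 \<longrightarrow> v \<pi>2 = 1 \<longrightarrow>
           tsub S (tp S \<pi>1 (inverse \<pi>1)) (tp S \<pi>2 (inverse \<pi>2)) \<in> Xfil S v 1)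
     \<and> bij_betw (tswap S) (tcarrier S) (tcarrier S)
     \<and> (\<forall>x\<in>tcarrier S. \<forall>y\<in>tcarrier S.
           tswap S (tadd S x y) = tadd S (tswap S x) (tswap S y)
         \<and> tswap S (tmul S x y) = tmul S (tswap S x) (tswap S y))
     \<and> tswap S (tone S) = tone S
     \<and> (\<forall>k. tswap S ` Xfil S v k = Xfil S v k)
     \<and> (\<exists>r. is_rX S v res n \<pi> r
          \<and> (\<forall>r'. is_rX S v res n \<pi> r' \<longrightarrow> (\<forall>\<alpha>\<in>Xfil S v 0. r' \<alpha> = r \<alpha>))
          \<and> (\<forall>\<pi>'. \<pi>' \<noteq> 0 \<longrightarrow> v \<pi>' = 1 \<longrightarrow> is_rX S v res n \<pi>' r)
          \<and> (\<forall>\<alpha>\<in>Xfil S v 0. r (tswap S \<alpha>) = pcompose (r \<alpha>) (monom 1 (n - 1)) mod (monom 1 n - 1)))"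
proof -
  interpret totally_ramified_residue S v n \<pi> res
    using ext unif res unfolding totally_ramified_cdvf_def by unfold_locales blast+
  show ?thesis
    apply (intro conjI)
    subgoal using X_mul by blast
    subgoal by (rule tone_X0)
    subgoal by (rule X_zero)
    subgoal using X_add X0_mul by blast
    subgoal using X_neg by blast
    subgoal using X_mul[of _ 0 _ i] by simp
    subgoal using X_add by blast
    subgoal by (rule X_graded_piece_free)
    subgoal by (rule X_eq_tsum_otens)
    subgoal using tsum_otens_eq_zero by blast
    subgoal using tp_inverse_minus_one_X1 by (simp add: vunits_def)
    subgoal using tp_twisted_mod_X1 by blast
    subgoal using tp_inverse_minus_one_X1 by blast
    subgoal using tp_uniformizer_mod_X1 by blast
    subgoal by (rule tswap_bij)
    subgoal using tswap_add tswap_mul by blast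
    subgoal by (rule tswap_one)
    subgoal using tswap_image_X by blast
    subgoal using unif is_rX_rX is_rX_unique rX_tswap by (intro exI[of _ rX] conjI; blast)
    done
qed

end
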